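(* Let $2\le n\le\kappa+1$ and $\ell=\binom{\kappa}{n-1}$. Let $B$ and $D$ be the matrices constructed below. Then the rows of $$D=\left[B,\,-B\ltimes W_{[\kappa^0,\kappa]}\ltimes W_{[\kappa,\kappa]},\,-B\ltimes W_{[\kappa,\kappa]}\ltimes W_{[\kappa,\kappa^2]},\,\dots,\,-B\ltimes W_{[\kappa^{n-2},\kappa]}\ltimes W_{[\kappa,\kappa^{n-1}]}\right]\in\mathbb R^{\kappa\ell\times n\kappa^n}$$ form a basis of the subspace $\mathcal K_{[n;\kappa]}\subseteq\mathbb R^{n\kappa^n}$ of (structure vectors of) skew-symmetric games.
   Context: Semi-tensor product: for $A\in\mathbb R^{m\times n}$, $B\in\mathbb R^{p\times q}$ and $t=\mathrm{lcm}(n,p)$, $A\ltimes B=(A\otimes I_{t/n})(B\otimes I_{t/p})$; associative, equal to the Kronecker product on column vectors. Swap matrix $W_{[m,n]}\in\mathbb R^{mn\times mn}$: the permutation matrix with $W_{[m,n]}(X\otimes Y)=Y\otimes X$ for $X\in\mathbb R^m,Y\in\mathbb R^n$ ($W_{[1,n]}=I_n$). $\delta_\kappa^j$ is the $j$-th column of $I_\kappa$. Construction: let $z^1,\dots,z^\ell$ be the strictly increasing tuples $(z_1<\dots<z_{n-1})$ with entries in $\{1,\dots,\kappa\}$, listed in lexicographic order. For $i=1,\dots,\ell$, $j=1,\dots,\kappa$ define the row vector $\eta^i_j\in\mathbb R^{\kappa^n}$ by $(\eta^i_j)^T=\delta_\kappa^j\otimes\sum_{\sigma\in\mathbf S_{n-1}}\mathrm{sgn}(\sigma)\,\delta_\kappa^{z^i_{\sigma(1)}}\otimes\cdots\otimes\delta_\kappa^{z^i_{\sigma(n-1)}}$,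 and let $B\in\mathbb R^{\kappa\ell\times\kappa^n}$ have rows $\eta^1_1,\dots,\eta^1_\kappa,\dots,\eta^\ell_1,\dots,\eta^\ell_\kappa$ in this order. Games: $G\in\mathcal G_{[n;\kappa]}$ has players $\{1,\dots,n\}$, each with strategies $\{1,\dots,\kappa\}$ (strategy $j$ identified with $\delta_\kappa^j$) and payoffs $c_i$; $V_i^c\in\mathbb R^{\kappa^n}$ is the row vector with $c_i(x_1,\dots,x_n)=V_i^c(x_1\otimes\cdots\otimes x_n)$, and $V_G=[V_1^c,\dots,V_n^c]\in\mathbb R^{n\kappa^n}$ identifies $\mathcal G_{[n;\kappa]}$ with $\mathbb R^{n\kappa^n}$. $G$ is skew-symmetric if for all $\sigma\in\mathbf S_n$, all $i$ and all profiles, $c_i(x_1,\dots,x_n)=\mathrm{sgn}(\sigma)c_{\sigma(i)}(x_{\sigma^{-1}(1)},\dots,x_{\sigma^{-1}(n)})$; $\mathcal K_{[n;\kappa]}$ is the subspace of their structure vectors. *)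

theory Defs
  imports "Jordan_Normal_Form.Matrix" "HOL-Combinatorics.Permutations" "HOL-Library.List_Lexorder"
begin

definition kron_mat :: "real mat \<Rightarrow> real mat \<Rightarrow> real mat" where
  "kron_mat A B = mat (dim_row A * dim_row B) (dim_col A * dim_col B)
     (\<lambda>(i,j). A $$ (i div dim_row B, j div dim_col B) * B $$ (i mod dim_row B, j mod dim_col B))"

definition stp :: "real mat \<Rightarrow> real mat \<Rightarrow> real mat" where
  "stp A B = (let n = dim_col A; p = dim_row B; t = lcm n p in
      kron_mat A (1\<^sub>m (t div n)) * kron_mat B (1\<^sub>m (t div p)))"

text \<open>Swap matrix W_[m,n]: the mn x mn permutation matrix with W (X \<otimes> Y) = Y \<otimes> X.
  (0-based: entry i*n+j of X \<otimes> Y is moved to entry j*m+i.)\<close>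
definition swap_mat :: "nat \<Rightarrow> nat \<Rightarrow> real mat" where
  "swap_mat m n = mat (m*n) (m*n) (\<lambda>(r,c). if r = (c mod n) * m + c div n then 1 else 0)"

definition kron_vec :: "real vec \<Rightarrow> real vec \<Rightarrow> real vec" where
  "kron_vec u v = vec (dim_vec u * dim_vec v) (\<lambda>i. u $ (i div dim_vec v) * v $ (i mod dim_vec v))"

definition kron_list :: "real vec list \<Rightarrow> real vec" where
  "kron_list xs = foldr kron_vec xs (vec 1 (\<lambda>_. 1))"

definition delta :: "nat \<Rightarrow> nat \<Rightarrow> real vec" where
  "delta \<kappa> j = unit_vec \<kappa> (j - 1)"

text \<open>Strictly increasing (n-1)-tuples with entries in {1..kappa}, in lexicographic order
  (z^1,...,z^l correspond to list positions 0,...,l-1).\<close>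
definition inc_tuples :: "nat \<Rightarrow> nat \<Rightarrow> nat list list" where
  "inc_tuples n \<kappa> = sorted_list_of_set
     {zs. length zs = n - 1 \<and> sorted_wrt (<) zs \<and> set zs \<subseteq> {1..\<kappa>}}"

text \<open>(eta^i_j)^T = delta^j \<otimes> sum_{sigma in S_{n-1}} sgn(sigma) delta^{z_{sigma(1)}} \<otimes> ... \<otimes> delta^{z_{sigma(n-1)}},
  where z is the given tuple (1-based entries z_1..z_{n-1} stored at list positions 0..n-2).\<close>
definition eta :: "nat \<Rightarrow> nat \<Rightarrow> nat list \<Rightarrow> nat \<Rightarrow> real vec" where
  "eta n \<kappa> z j = kron_vec (delta \<kappa> j)
     (vec (\<kappa> ^ (n - 1)) (\<lambda>k. \<Sum>\<sigma> \<in> {\<sigma>. \<sigma> permutes {1..n-1}}.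
        of_int (sign \<sigma>) * kron_list (map (\<lambda>t. delta \<kappa> (z ! (\<sigma> t - 1))) [1..<n]) $ k))"

text \<open>B has rows eta^1_1,...,eta^1_kappa,...,eta^l_1,...,eta^l_kappa (0-based row r = i*kappa + j).\<close>
definition B_mat :: "nat \<Rightarrow> nat \<Rightarrow> real mat" where
  "B_mat n \<kappa> = mat (\<kappa> * length (inc_tuples n \<kappa>)) (\<kappa> ^ n)
     (\<lambda>(r,c). eta n \<kappa> (inc_tuples n \<kappa> ! (r div \<kappa>)) (r mod \<kappa> + 1) $ c)"

definition D_block :: "nat \<Rightarrow> nat \<Rightarrow> nat \<Rightarrow> real mat" where
  "D_block n \<kappa> k = (if k = 0 then B_mat n \<kappa>
     else stp (stp (- B_mat n \<kappa>) (swap_mat (\<kappa> ^ (k - 1)) \<kappa>)) (swap_mat \<kappa> (\<kappa> ^ k)))"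

text \<open>D = [block 0, block 1, ..., block (n-1)] (horizontal concatenation, each block has kappa^n columns).\<close>
definition D_mat :: "nat \<Rightarrow> nat \<Rightarrow> real mat" where
  "D_mat n \<kappa> = mat (dim_row (B_mat n \<kappa>)) (n * \<kappa> ^ n)
     (\<lambda>(r,c). D_block n \<kappa> (c div \<kappa> ^ n) $$ (r, c mod \<kappa> ^ n))"

text \<open>Payoff of player i (1-based) at profile x (x t in {1..kappa} is the strategy of player t),
  for the game with structure vector v = [V_1,...,V_n]: c_i(x) = V_i (x_1 \<otimes> ... \<otimes> x_n).\<close>
definition payoff :: "nat \<Rightarrow> nat \<Rightarrow> real vec \<Rightarrow> nat \<Rightarrow> (nat \<Rightarrow> nat) \<Rightarrow> real" where
  "payoff n \<kappa> v i x = (\<Sum>col < \<kappa> ^ n. v $ ((i - 1) * \<kappa> ^ n + col) *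
      kron_list (map (\<lambda>t. delta \<kappa> (x t)) [1..<n+1]) $ col)"

definition profile :: "nat \<Rightarrow> nat \<Rightarrow> (nat \<Rightarrow> nat) \<Rightarrow> bool" where
  "profile n \<kappa> x \<longleftrightarrow> (\<forall>t \<in> {1..n}. x t \<in> {1..\<kappa>})"

definition skew_symmetric_game :: "nat \<Rightarrow> nat \<Rightarrow> real vec \<Rightarrow> bool" where
  "skew_symmetric_game n \<kappa> v \<longleftrightarrow>
     (\<forall>\<sigma>. \<sigma> permutes {1..n} \<longrightarrow> (\<forall>i \<in> {1..n}. \<forall>x. profile n \<kappa> x \<longrightarrow>
        payoff n \<kappa> v i x = of_int (sign \<sigma>) * payoff n \<kappa> v (\<sigma> i) (\<lambda>t. x (Hilbert_Choice.inv \<sigma> t))))"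

definition skew_space :: "nat \<Rightarrow> nat \<Rightarrow> real vec set" where
  "skew_space n \<kappa> = {v. dim_vec v = n * \<kappa> ^ n \<and> skew_symmetric_game n \<kappa> v}"

definition lincomb_rows :: "real mat \<Rightarrow> (nat \<Rightarrow> real) \<Rightarrow> real vec" where
  "lincomb_rows M c = vec (dim_col M) (\<lambda>k. \<Sum>r < dim_row M. c r * M $$ (r, k))"

definition rows_form_basis :: "real mat \<Rightarrow> real vec set \<Rightarrow> bool" where
  "rows_form_basis M S \<longleftrightarrow>
     (\<forall>c. lincomb_rows M c = 0\<^sub>v (dim_col M) \<longrightarrow> (\<forall>r < dim_row M. c r = 0)) \<and>
     S = {lincomb_rows M c | c. True}"

end

theory Submission
  imports Defs
begin

text \<open>A structure vector is read through its payoffs: c_i(x) is its entry at position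
  (i - 1) \<kappa>^n + (base-\<kappa> index of x). Block i - 1 of D is -B followed by two swap matrices
  whose product exchanges the tensor factors of players 1 and i. Hence the combination of the rows
  of D with coefficients c is the game with c_1 = G := \<Sum>_r c_r \<eta>_r and c_i(x) = -G(x with
  players 1 and i exchanged). A game is skew-symmetric exactly when it has this shape with G
  alternating in the strategies of players 2, ..., n. The rows \<eta>_r of B, indexed by a
  strategy j of player 1 and an increasing tuple z of opponent strategies, are such alternating
  functions, and evaluation at the profiles (j, z) is the dual basis: \<eta>_r (j', z') = [r = r'].\<close>

section \<open>Base-\<kappa> indices of profiles\<close>

text \<open>The base-k number with digits x a - 1, ..., x (b - 1) - 1: the position of the 1 in
  delta k (x a) \<otimes> ... \<otimes> delta k (x (b - 1)).\<close>
definition digit_index :: "nat \<Rightarrow> (nat \<Rightarrow> nat) \<Rightarrow> nat \<Rightarrow> nat \<Rightarrow> nat" where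
  "digit_index k x a b = (\<Sum>t\<in>{a..<b}. (x t - 1) * k ^ (b - 1 - t))"

lemma digit_index_empty [simp]: "b \<le> a \<Longrightarrow> digit_index k x a b = 0"
  by (simp add: digit_index_def)

lemma digit_index_single [simp]: "digit_index k x b (Suc b) = x b - 1"
  by (simp add: digit_index_def)

lemma digit_index_split:
  assumes "a \<le> b" "b \<le> c"
  shows "digit_index k x a c = digit_index k x a b * k ^ (c - b) + digit_index k x b c"
proof -
  have "digit_index k x a c
      = (\<Sum>t\<in>{a..<b}. (x t - 1) * k ^ (c - 1 - t)) + (\<Sum>t\<in>{b..<c}. (x t - 1) * k ^ (c - 1 - t))"
    unfolding digit_index_def using assms by (simp add: sum.atLeastLessThan_concat)
  also have "(\<Sum>t\<in>{a..<b}. (x t - 1) * k ^ (c - 1 - t)) = digit_index k x a b * k ^ (c - b)"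
    unfolding digit_index_def sum_distrib_right
  proof (rule sum.cong)
    fix t assume "t \<in> {a..<b}"
    then have "c - 1 - t = (b - 1 - t) + (c - b)" using assms by auto
    then show "(x t - 1) * k ^ (c - 1 - t) = (x t - 1) * k ^ (b - 1 - t) * k ^ (c - b)"
      by (simp add: power_add)
  qed simp
  finally show ?thesis by (simp add: digit_index_def)
qed

lemma digit_index_Suc:
  "a \<le> b \<Longrightarrow> digit_index k x a (Suc b) = digit_index k x a b * k + (x b - 1)"
  using digit_index_split[of a b "Suc b" k x] by simp

lemma digit_index_cong:
  "(\<And>t. t \<in> {a..<b} \<Longrightarrow> x t = y t) \<Longrightarrow> digit_index k x a b = digit_index k y a b"
  unfolding digit_index_def by (intro sum.cong) auto

lemma digit_index_shift: "digit_index k x (Suc a) (Suc b) = digit_index k (\<lambda>t. x (Suc t)) a b"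
  unfolding digit_index_def Suc_eq_plus1 sum.shift_bounds_nat_ivl by simp

lemma digit_index_less:
  assumes "x ` {a..<b} \<subseteq> {1..k}"
  shows "digit_index k x a b < k ^ (b - a)"
  using assms
proof (induction b)
  case (Suc b)
  show ?case
  proof (cases "a \<le> b")
    case True
    have "x ` {a..<b} \<subseteq> {1..k}" and xb: "x b \<in> {1..k}"
      using Suc.prems True by force+
    then have IH: "digit_index k x a b < k ^ (b - a)"
      using Suc.IH by blast
    have "digit_index k x a (Suc b) < (digit_index k x a b + 1) * k"
      using digit_index_Suc[OF True] xb by auto
    also have "\<dots> \<le> k ^ (b - a) * k"
      using IH by (intro mult_right_mono) auto
    finally show ?thesis
      using True by (simp add: Suc_diff_le mult.commute)
  qed simp
qed simp

lemma digit_index_div_mod: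
  assumes "a \<le> b" "b \<le> c" "x ` {b..<c} \<subseteq> {1..k}"
  shows "digit_index k x a c div k ^ (c - b) = digit_index k x a b"
    and "digit_index k x a c mod k ^ (c - b) = digit_index k x b c"
proof -
  have "r < m \<Longrightarrow> (q * m + r) div m = q \<and> (q * m + r) mod m = r" for q r m :: nat
    by simp
  from this[OF digit_index_less[OF assms(3)], of "digit_index k x a b"]
  show "digit_index k x a c div k ^ (c - b) = digit_index k x a b"
    and "digit_index k x a c mod k ^ (c - b) = digit_index k x b c"
    using digit_index_split[OF assms(1,2), of k x] by simp_all
qed

lemma digit_index_inj:
  assumes "x ` {a..<b} \<subseteq> {1..k}" "y ` {a..<b} \<subseteq> {1..k}"
    and "digit_index k x a b = digit_index k y a b"
  shows "\<forall>t\<in>{a..<b}. x t = y t"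
  using assms
proof (induction b)
  case (Suc b)
  show ?case
  proof (cases "a \<le> b")
    case True
    have x: "x ` {b..<Suc b} \<subseteq> {1..k}" and y: "y ` {b..<Suc b} \<subseteq> {1..k}"
      using Suc.prems True by force+
    have "digit_index k x a b = digit_index k y a b"
      using digit_index_div_mod(1)[OF True le_SucI[OF order_refl] x]
        digit_index_div_mod(1)[OF True le_SucI[OF order_refl] y] Suc.prems(3) by simp
    moreover have "x ` {a..<b} \<subseteq> {1..k}" "y ` {a..<b} \<subseteq> {1..k}"
      using Suc.prems by force+
    ultimately have "\<forall>t\<in>{a..<b}. x t = y t"
      using Suc.IH by blast
    moreover have "x b - 1 = y b - 1"
      using digit_index_div_mod(2)[OF True le_SucI[OF order_refl] x]
        digit_index_div_mod(2)[OF True le_SucI[OF order_refl] y] Suc.prems(3) by simp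
    then have "x b = y b"
      using x y by force
    ultimately show ?thesis
      by (auto simp: less_Suc_eq)
  qed auto
qed simp

lemma digit_index_surj:
  assumes "1 \<le> k" "a \<le> b" "c < k ^ (b - a)"
  shows "\<exists>x. range x \<subseteq> {1..k} \<and> digit_index k x a b = c"
  using assms(2,3)
proof (induction b arbitrary: c)
  case (Suc b)
  show ?case
  proof (cases "a = Suc b")
    case False
    then have ab: "a \<le> b"
      using Suc.prems by simp
    have "c div k < k ^ (b - a)"
      using Suc.prems ab by (simp add: Suc_diff_le less_mult_imp_div_less mult.commute)
    then obtain x where x: "range x \<subseteq> {1..k}" "digit_index k x a b = c div k"
      using Suc.IH ab by blast
    define x' where "x' = x(b := c mod k + 1)"
    have "range x' \<subseteq> {1..k}"
      using x assms(1) by (auto simp: x'_def Suc_le_eq)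
    moreover have "digit_index k x' a b = digit_index k x a b"
      by (rule digit_index_cong) (auto simp: x'_def)
    then have "digit_index k x' a (Suc b) = c"
      using x digit_index_Suc[OF ab, of k x'] by (simp add: x'_def)
    ultimately show ?thesis
      by blast
  qed (use Suc.prems assms(1) in \<open>auto intro: exI[of _ "\<lambda>_. 1"]\<close>)
qed (use assms(1) in \<open>auto intro: exI[of _ "\<lambda>_. 1"]\<close>)

lemma kron_vec_unit_vec:
  assumes "i < k" "j < m"
  shows "kron_vec (unit_vec k i) (unit_vec m j) = unit_vec (k * m) (i * m + j)"
proof (rule eq_vecI)
  fix q assume "q < dim_vec (unit_vec (k * m) (i * m + j))"
  then have q: "q < k * m" by simp
  have "q div m = i \<and> q mod m = j \<longleftrightarrow> q = i * m + j"
    using assms by (auto simp: div_mult_mod_eq[symmetric])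
  then show "kron_vec (unit_vec k i) (unit_vec m j) $ q = unit_vec (k * m) (i * m + j) $ q"
    using q assms by (auto simp: kron_vec_def unit_vec_def less_mult_imp_div_less mult.commute)
qed (simp add: kron_vec_def)

lemma kron_list_Cons: "kron_list (y # ys) = kron_vec y (kron_list ys)"
  by (simp add: kron_list_def)

lemma kron_list_deltas:
  assumes "x ` {a..<b} \<subseteq> {1..k}"
  shows "kron_list (map (\<lambda>t. delta k (x t)) [a..<b]) = unit_vec (k ^ (b - a)) (digit_index k x a b)"
  using assms
proof (induction "b - a" arbitrary: a)
  case 0
  have "vec 1 (\<lambda>_. 1) = (unit_vec 1 0 :: real vec)"
    by (auto simp: unit_vec_def)
  then show ?case
    using 0 by (simp add: kron_list_def)
next
  case (Suc d)
  then have ab: "a < b"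
    by simp
  then have xa: "x a \<in> {1..k}"
    using Suc.prems by force
  have IH: "kron_list (map (\<lambda>t. delta k (x t)) [Suc a..<b])
      = unit_vec (k ^ (b - Suc a)) (digit_index k x (Suc a) b)"
    using Suc.hyps(1)[of "Suc a"] Suc.hyps(2) Suc.prems by force
  have "kron_list (map (\<lambda>t. delta k (x t)) [a..<b])
      = kron_vec (unit_vec k (x a - 1)) (unit_vec (k ^ (b - Suc a)) (digit_index k x (Suc a) b))"
    using ab IH by (simp add: upt_conv_Cons kron_list_Cons delta_def)
  also have "\<dots> = unit_vec (k * k ^ (b - Suc a)) ((x a - 1) * k ^ (b - Suc a) + digit_index k x (Suc a) b)"
    using xa Suc.prems by (intro kron_vec_unit_vec digit_index_less) auto
  also have "k * k ^ (b - Suc a) = k ^ (b - a)"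
    using ab by (metis Suc_diff_Suc power_Suc)
  also have "(x a - 1) * k ^ (b - Suc a) + digit_index k x (Suc a) b = digit_index k x a b"
    using digit_index_split[of a "Suc a" b k x] ab by simp
  finally show ?case .
qed

lemma kron_list_deltas_index:
  assumes "x ` {a..<b} \<subseteq> {1..k}" "y ` {a..<b} \<subseteq> {1..k}"
  shows "kron_list (map (\<lambda>t. delta k (y t)) [a..<b]) $ digit_index k x a b
       = (if \<forall>t\<in>{a..<b}. x t = y t then 1 else 0)"
proof (cases "\<forall>t\<in>{a..<b}. x t = y t")
  case True
  then show ?thesis
    using digit_index_cong[of a b x y k] digit_index_less[OF assms(2)]
    by (simp add: kron_list_deltas[OF assms(2)])
next
  case False
  then have "digit_index k x a b \<noteq> digit_index k y a b"
    using digit_index_inj[OF assms] by blast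
  then show ?thesis
    using False digit_index_less[OF assms(1)] digit_index_less[OF assms(2)]
    by (simp add: kron_list_deltas[OF assms(2)])
qed

lemma profile_iff_image: "profile n \<kappa> x \<longleftrightarrow> x ` {1..<n+1} \<subseteq> {1..\<kappa>}"
  unfolding profile_def by force

lemma payoff_eq_index:
  assumes "profile n \<kappa> x"
  shows "payoff n \<kappa> v i x = v $ ((i - 1) * \<kappa> ^ n + digit_index \<kappa> x 1 (n + 1))"
proof -
  have x: "x ` {1..<n+1} \<subseteq> {1..\<kappa>}"
    using assms by (simp add: profile_iff_image)
  have "payoff n \<kappa> v i x = (\<Sum>col<\<kappa> ^ n.
      if col = digit_index \<kappa> x 1 (n + 1) then v $ ((i - 1) * \<kappa> ^ n + col) else 0)"
    unfolding payoff_def kron_list_deltas[OF x] by (intro sum.cong) (auto simp: unit_vec_def)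
  then show ?thesis
    using digit_index_less[OF x] by simp
qed

lemma payoff_cong: "\<forall>t\<in>{1..n}. x t = y t \<Longrightarrow> payoff n \<kappa> v i x = payoff n \<kappa> v i y"
  unfolding payoff_def by (intro sum.cong arg_cong2[where f = "(*)"] arg_cong2[where f = "($)"]
      arg_cong[where f = kron_list]) auto

lemma profile_comp:
  "profile n \<kappa> x \<Longrightarrow> \<pi> permutes {1..n} \<Longrightarrow> profile n \<kappa> (x \<circ> \<pi>)"
  using permutes_in_image unfolding profile_def by fastforce

section \<open>Semi-tensor products with swap matrices\<close>

lemma dim_kron_mat [simp]:
  "dim_row (kron_mat A B) = dim_row A * dim_row B"
  "dim_col (kron_mat A B) = dim_col A * dim_col B"
  by (simp_all add: kron_mat_def)

lemma kron_mat_one_right: "kron_mat A (1\<^sub>m 1) = A"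
  by (rule eq_matI) (auto simp: kron_mat_def)

lemma stp_eq_mult_kron:
  assumes "dim_col A = dim_row W * q" "0 < dim_col A"
  shows "stp A W = A * kron_mat W (1\<^sub>m q)"
proof -
  have "lcm (dim_col A) (dim_row W) = dim_col A"
    using assms by (simp add: lcm_proj1_if_dvd)
  then show ?thesis
    using assms kron_mat_one_right[of A] by (simp add: stp_def Let_def)
qed

lemma mult_mat_index_perm_column:
  fixes A P :: "real mat"
  assumes "A \<in> carrier_mat R N" "P \<in> carrier_mat N N" "r < R" "c < N" "p < N"
    and "\<And>i. i < N \<Longrightarrow> P $$ (i, c) = (if i = p then 1 else 0)"
  shows "(A * P) $$ (r, c) = A $$ (r, p)"
proof -
  have "(A * P) $$ (r, c) = (\<Sum>i<N. A $$ (r, i) * P $$ (i, c))"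
    using assms(1-4) by (simp add: scalar_prod_def atLeast0LessThan)
  also have "\<dots> = (\<Sum>i<N. if i = p then A $$ (r, i) else 0)"
    using assms(6) by (intro sum.cong) auto
  finally show ?thesis
    using assms(5) by simp
qed

text \<open>Column j of W_[m,l] \<otimes> I_q is the unit vector at swap_index m l q j: the two leading
  mixed-radix digits of j are exchanged.\<close>
definition swap_index :: "nat \<Rightarrow> nat \<Rightarrow> nat \<Rightarrow> nat \<Rightarrow> nat" where
  "swap_index m l q j = ((j div q) mod l * m + (j div q) div l) * q + j mod q"

lemma swap_index_less:
  assumes "j < m * l * q"
  shows "swap_index m l q j < m * l * q"
proof -
  define d where "d = j div q"
  have q: "0 < q"
    using assms by (cases q) auto
  have d: "d < m * l"
    using assms by (simp add: d_def less_mult_imp_div_less)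
  then have "0 < l"
    by (cases l) auto
  have "d mod l * m + d div l < (d mod l + 1) * m"
    using less_mult_imp_div_less[OF d] by simp
  also have "\<dots> \<le> l * m"
    using \<open>0 < l\<close> by (intro mult_right_mono) (auto simp: Suc_le_eq)
  finally have "d mod l * m + d div l + 1 \<le> m * l"
    by (simp add: mult.commute)
  then have "(d mod l * m + d div l + 1) * q \<le> m * l * q"
    by (rule mult_right_mono) simp
  then show ?thesis
    unfolding swap_index_def d_def[symmetric] using mod_less_divisor[OF q, of j] by simp
qed

lemma kron_swap_mat_index:
  assumes "i < m * l * q" "j < m * l * q"
  shows "kron_mat (swap_mat m l) (1\<^sub>m q) $$ (i, j) = (if i = swap_index m l q j then 1 else 0)"
proof -
  have q: "0 < q"
    using assms by (cases q) auto
  have d: "i div q < m * l" "j div q < m * l"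
    using assms by (auto simp: less_mult_imp_div_less)
  have "s < q \<Longrightarrow> i div q = P \<and> i mod q = s \<longleftrightarrow> i = P * q + s" for P s
    by auto
  then have "i div q = P \<and> i mod q = j mod q \<longleftrightarrow> i = P * q + j mod q" for P
    using mod_less_divisor[OF q, of j] by blast
  then have iff: "i div q = (j div q) mod l * m + (j div q) div l \<and> i mod q = j mod q
      \<longleftrightarrow> i = swap_index m l q j"
    by (simp add: swap_index_def)
  have "kron_mat (swap_mat m l) (1\<^sub>m q) $$ (i, j)
      = swap_mat m l $$ (i div q, j div q) * 1\<^sub>m q $$ (i mod q, j mod q)"
    using assms by (simp add: kron_mat_def swap_mat_def)
  also have "\<dots> = (if i div q = (j div q) mod l * m + (j div q) div l \<and> i mod q = j mod q
      then 1 else 0)"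
    using d q by (simp add: swap_mat_def)
  finally show ?thesis
    unfolding iff .
qed

lemma stp_swap_mat:
  fixes A :: "real mat"
  assumes A: "A \<in> carrier_mat R N" and N: "N = m * l * q" "0 < N"
  shows "stp A (swap_mat m l) \<in> carrier_mat R N"
    and "r < R \<Longrightarrow> c < N \<Longrightarrow> stp A (swap_mat m l) $$ (r, c) = A $$ (r, swap_index m l q c)"
proof -
  have stp: "stp A (swap_mat m l) = A * kron_mat (swap_mat m l) (1\<^sub>m q)"
  proof (rule stp_eq_mult_kron)
    show "dim_col A = dim_row (swap_mat m l) * q"
      using A N by (simp add: swap_mat_def)
    show "0 < dim_col A"
      using A N by simp
  qed
  have P: "kron_mat (swap_mat m l) (1\<^sub>m q) \<in> carrier_mat N N"
    unfolding carrier_mat_def dim_kron_mat swap_mat_def dim_row_mat dim_col_mat index_one_mat N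
    by simp
  show "stp A (swap_mat m l) \<in> carrier_mat R N"
    unfolding stp using A P by (rule mult_carrier_mat)
  show "stp A (swap_mat m l) $$ (r, c) = A $$ (r, swap_index m l q c)"
    if r: "r < R" and c: "c < N"
    using c unfolding stp N(1)
    by (intro mult_mat_index_perm_column[OF A[unfolded N(1)] P[unfolded N(1)] r]
        swap_index_less kron_swap_mat_index)
qed

lemma B_mat_carrier: "B_mat n \<kappa> \<in> carrier_mat (\<kappa> * length (inc_tuples n \<kappa>)) (\<kappa> ^ n)"
  unfolding B_mat_def by (rule mat_carrier)

lemma D_block_index:
  assumes "1 \<le> \<kappa>" "1 \<le> b" "b < n" and r: "r < dim_row (B_mat n \<kappa>)" and c: "c < \<kappa> ^ n"
  shows "D_block n \<kappa> b $$ (r, c) = - B_mat n \<kappa> $$ (r,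
      swap_index (\<kappa> ^ (b - 1)) \<kappa> (\<kappa> ^ (n - b)) (swap_index \<kappa> (\<kappa> ^ b) (\<kappa> ^ (n - b - 1)) c))"
proof -
  define R where "R = dim_row (B_mat n \<kappa>)"
  define c' where "c' = swap_index \<kappa> (\<kappa> ^ b) (\<kappa> ^ (n - b - 1)) c"
  have "\<kappa> ^ (b - 1) * \<kappa> * \<kappa> ^ (n - b) = \<kappa> ^ ((b - 1) + 1 + (n - b))"
    and "\<kappa> * \<kappa> ^ b * \<kappa> ^ (n - b - 1) = \<kappa> ^ (1 + b + (n - b - 1))"
    by (simp_all add: power_add)
  moreover have "(b - 1) + 1 + (n - b) = n" "1 + b + (n - b - 1) = n"
    using assms(2,3) by simp_all
  ultimately have e1: "\<kappa> ^ (b - 1) * \<kappa> * \<kappa> ^ (n - b) = \<kappa> ^ n"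
    and e2: "\<kappa> * \<kappa> ^ b * \<kappa> ^ (n - b - 1) = \<kappa> ^ n"
    by simp_all
  have pos: "0 < \<kappa> ^ n"
    using assms(1) by simp
  have B: "B_mat n \<kappa> \<in> carrier_mat R (\<kappa> ^ n)"
    using B_mat_carrier[of n \<kappa>] unfolding R_def carrier_mat_def by blast
  then have mB: "- B_mat n \<kappa> \<in> carrier_mat R (\<kappa> ^ n)"
    by (rule uminus_carrier_mat)
  have c2: "c' < \<kappa> ^ n"
    using swap_index_less[of c \<kappa> "\<kappa> ^ b" "\<kappa> ^ (n - b - 1)"] c unfolding c'_def e2 .
  have "D_block n \<kappa> b $$ (r, c)
      = stp (stp (- B_mat n \<kappa>) (swap_mat (\<kappa> ^ (b - 1)) \<kappa>)) (swap_mat \<kappa> (\<kappa> ^ b)) $$ (r, c)"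
    using assms(2) by (simp add: D_block_def)
  also have "\<dots> = stp (- B_mat n \<kappa>) (swap_mat (\<kappa> ^ (b - 1)) \<kappa>) $$ (r, c')"
    unfolding c'_def
    using stp_swap_mat(2)[OF stp_swap_mat(1)[OF mB e1[symmetric] pos] e2[symmetric] pos r[folded R_def] c] .
  also have "\<dots> = (- B_mat n \<kappa>) $$ (r, swap_index (\<kappa> ^ (b - 1)) \<kappa> (\<kappa> ^ (n - b)) c')"
    using stp_swap_mat(2)[OF mB e1[symmetric] pos r[folded R_def] c2] .
  also have "\<dots> = - B_mat n \<kappa> $$ (r, swap_index (\<kappa> ^ (b - 1)) \<kappa> (\<kappa> ^ (n - b)) c')"
    using B r swap_index_less[of c' "\<kappa> ^ (b - 1)" \<kappa> "\<kappa> ^ (n - b)"] c2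
    unfolding e1 R_def carrier_mat_def by (intro index_uminus_mat(1)) auto
  finally show ?thesis
    unfolding c'_def .
qed

text \<open>W_[k,k^b] moves the first of the n tensor factors behind the next b ones.\<close>
lemma swap_index_move_first_digit:
  assumes b: "1 \<le> b" "b < n" and x: "x ` {1..<n+1} \<subseteq> {1..k}"
  shows "swap_index k (k ^ b) (k ^ (n - b - 1)) (digit_index k x 1 (n + 1))
       = digit_index k (\<lambda>t. if t \<le> b then x (t + 1) else if t = b + 1 then x 1 else x t) 1 (n + 1)"
    (is "_ = digit_index k ?y 1 (n + 1)")
proof -
  have sub: "x ` {c..<d} \<subseteq> {1..k}" if "1 \<le> c" "d \<le> n + 1" for c d
    by (rule subset_trans[OF image_mono x]) (use that in auto)
  have "n + 1 - (b + 2) = n - b - 1"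
    by simp
  then have d1: "digit_index k x 1 (n + 1) div k ^ (n - b - 1) = digit_index k x 1 (b + 2)"
    and m1: "digit_index k x 1 (n + 1) mod k ^ (n - b - 1) = digit_index k x (b + 2) (n + 1)"
    using digit_index_div_mod[of 1 "b + 2" "n + 1" x k] b sub[of "b + 2" "n + 1"] by auto
  have d2: "digit_index k x 1 (b + 2) div k ^ b = x 1 - 1"
    and m2: "digit_index k x 1 (b + 2) mod k ^ b = digit_index k x 2 (b + 2)"
    using digit_index_div_mod[of 1 2 "b + 2" x k] b sub[of 2 "b + 2"] by (auto simp: numeral_2_eq_2)
  have "digit_index k ?y 1 (n + 1) = digit_index k ?y 1 (b + 2) * k ^ (n - b - 1) + digit_index k ?y (b + 2) (n + 1)"
    using digit_index_split[of 1 "b + 2" "n + 1" k ?y] b \<open>n + 1 - (b + 2) = n - b - 1\<close> by simp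
  also have "digit_index k ?y 1 (b + 2) = digit_index k ?y 1 (b + 1) * k + (x 1 - 1)"
    using digit_index_Suc[of 1 "b + 1" k ?y] b by simp
  also have "digit_index k ?y 1 (b + 1) = digit_index k (\<lambda>t. x (Suc t)) 1 (b + 1)"
    by (rule digit_index_cong) auto
  also have "\<dots> = digit_index k x 2 (b + 2)"
    using digit_index_shift[of k x 1 "b + 1"] by (simp add: numeral_2_eq_2)
  also have "digit_index k ?y (b + 2) (n + 1) = digit_index k x (b + 2) (n + 1)"
    by (rule digit_index_cong) auto
  finally show ?thesis
    unfolding swap_index_def d1 m1 d2 m2 by simp
qed

text \<open>W_[k^(b-1),k] moves the b-th of the n tensor factors to the front.\<close>
lemma swap_index_move_digit_to_front:
  assumes b: "1 \<le> b" "b < n" and y: "y ` {1..<n+1} \<subseteq> {1..k}"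
  shows "swap_index (k ^ (b - 1)) k (k ^ (n - b)) (digit_index k y 1 (n + 1))
       = digit_index k (\<lambda>t. if t = 1 then y b else if t \<le> b then y (t - 1) else y t) 1 (n + 1)"
    (is "_ = digit_index k ?z 1 (n + 1)")
proof -
  have sub: "y ` {c..<d} \<subseteq> {1..k}" if "1 \<le> c" "d \<le> n + 1" for c d
    by (rule subset_trans[OF image_mono y]) (use that in auto)
  have "n + 1 - (b + 1) = n - b"
    by simp
  then have d1: "digit_index k y 1 (n + 1) div k ^ (n - b) = digit_index k y 1 (b + 1)"
    and m1: "digit_index k y 1 (n + 1) mod k ^ (n - b) = digit_index k y (b + 1) (n + 1)"
    using digit_index_div_mod[of 1 "b + 1" "n + 1" y k] b sub[of "b + 1" "n + 1"] by auto
  have d2: "digit_index k y 1 (b + 1) div k = digit_index k y 1 b"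
    and m2: "digit_index k y 1 (b + 1) mod k = y b - 1"
    using digit_index_div_mod[of 1 b "b + 1" y k] b sub[of b "b + 1"] by auto
  have "digit_index k ?z 1 (n + 1) = digit_index k ?z 1 (b + 1) * k ^ (n - b) + digit_index k ?z (b + 1) (n + 1)"
    using digit_index_split[of 1 "b + 1" "n + 1" k ?z] b \<open>n + 1 - (b + 1) = n - b\<close> by simp
  also have "digit_index k ?z 1 (b + 1) = digit_index k ?z 1 2 * k ^ (b - 1) + digit_index k ?z 2 (b + 1)"
    using digit_index_split[of 1 2 "b + 1" k ?z] b by simp
  also have "digit_index k ?z 1 2 = y b - 1"
    by (simp add: numeral_2_eq_2)
  also have "digit_index k ?z 2 (b + 1) = digit_index k (\<lambda>t. ?z (Suc t)) 1 b"
    using digit_index_shift[of k ?z 1 b] by (simp add: numeral_2_eq_2)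
  also have "\<dots> = digit_index k y 1 b"
    by (rule digit_index_cong) auto
  also have "digit_index k ?z (b + 1) (n + 1) = digit_index k y (b + 1) (n + 1)"
    using b by (intro digit_index_cong) auto
  finally show ?thesis
    unfolding swap_index_def d1 m1 d2 m2 by simp
qed

lemma D_block_profile_index:
  assumes "1 \<le> \<kappa>" and b: "1 \<le> b" "b < n" and r: "r < dim_row (B_mat n \<kappa>)"
    and x: "profile n \<kappa> x"
  shows "D_block n \<kappa> b $$ (r, digit_index \<kappa> x 1 (n + 1))
       = - B_mat n \<kappa> $$ (r, digit_index \<kappa> (x \<circ> Transposition.transpose 1 (b + 1)) 1 (n + 1))"
proof -
  define y where "y = (\<lambda>t. if t \<le> b then x (t + 1) else if t = b + 1 then x 1 else x t)"
  have x': "x ` {1..<n+1} \<subseteq> {1..\<kappa>}"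
    using x by (simp add: profile_iff_image)
  have y: "y ` {1..<n+1} \<subseteq> {1..\<kappa>}"
    using x' b unfolding y_def by (auto simp: image_subset_iff)
  have "digit_index \<kappa> x 1 (n + 1) < \<kappa> ^ n"
    using digit_index_less[OF x'] by simp
  then have "D_block n \<kappa> b $$ (r, digit_index \<kappa> x 1 (n + 1)) = - B_mat n \<kappa> $$ (r,
      swap_index (\<kappa> ^ (b - 1)) \<kappa> (\<kappa> ^ (n - b)) (digit_index \<kappa> y 1 (n + 1)))"
    unfolding y_def swap_index_move_first_digit[OF b x', symmetric]
    by (rule D_block_index[OF assms(1) b r])
  also have "swap_index (\<kappa> ^ (b - 1)) \<kappa> (\<kappa> ^ (n - b)) (digit_index \<kappa> y 1 (n + 1))
      = digit_index \<kappa> (x \<circ> Transposition.transpose 1 (b + 1)) 1 (n + 1)"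
    unfolding swap_index_move_digit_to_front[OF b y] using b
    by (intro digit_index_cong) (auto simp: y_def Transposition.transpose_def)
  finally show ?thesis .
qed

section \<open>The entries of B\<close>

lemma set_inc_tuples:
  "set (inc_tuples n \<kappa>) = {zs. length zs = n - 1 \<and> sorted_wrt (<) zs \<and> set zs \<subseteq> {1..\<kappa>}}"
proof -
  have "finite {zs. length zs = n - 1 \<and> sorted_wrt (<) zs \<and> set zs \<subseteq> {1..\<kappa>}}"
    by (rule finite_subset[OF _ finite_lists_length_eq[of "{1..\<kappa>}" "n - 1"]]) auto
  then show ?thesis
    by (simp add: inc_tuples_def)
qed

lemma distinct_inc_tuples: "distinct (inc_tuples n \<kappa>)"
  by (simp add: inc_tuples_def)

lemma inc_tuples_nth:
  assumes "i < length (inc_tuples n \<kappa>)"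
  shows "length (inc_tuples n \<kappa> ! i) = n - 1" "distinct (inc_tuples n \<kappa> ! i)"
    "set (inc_tuples n \<kappa> ! i) \<subseteq> {1..\<kappa>}" "sorted_wrt (<) (inc_tuples n \<kappa> ! i)"
  using nth_mem[OF assms] unfolding set_inc_tuples by (auto simp: strict_sorted_iff)

text \<open>Increasing tuples are the sorted enumerations of subsets.\<close>
lemma length_inc_tuples: "length (inc_tuples n \<kappa>) = \<kappa> choose (n - 1)"
proof -
  let ?S = "{zs. length zs = n - 1 \<and> sorted_wrt (<) zs \<and> set zs \<subseteq> {1..\<kappa>}}"
  have "inj_on set ?S"
    by (auto simp: inj_on_def intro: strict_sorted_equal)
  moreover have "set ` ?S = {A. A \<subseteq> {1..\<kappa>} \<and> card A = n - 1}"
  proof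
    show "set ` ?S \<subseteq> {A. A \<subseteq> {1..\<kappa>} \<and> card A = n - 1}"
      by (auto simp: strict_sorted_iff distinct_card)
    show "{A. A \<subseteq> {1..\<kappa>} \<and> card A = n - 1} \<subseteq> set ` ?S"
    proof
      fix A assume A: "A \<in> {A. A \<subseteq> {1..\<kappa>} \<and> card A = n - 1}"
      then have "finite A"
        by (auto intro: finite_subset)
      then have "sorted_list_of_set A \<in> ?S"
        using A by simp
      then show "A \<in> set ` ?S"
        using \<open>finite A\<close> by (metis (no_types, lifting) image_eqI set_sorted_list_of_set)
    qed
  qed
  ultimately have "card ?S = \<kappa> choose (n - 1)"
    using card_image n_subsets[of "{1..\<kappa>}" "n - 1"] by fastforce
  then show ?thesis
    using distinct_card[OF distinct_inc_tuples] set_inc_tuples by metis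
qed

definition tail_matches :: "nat list \<Rightarrow> (nat \<Rightarrow> nat) \<Rightarrow> (nat \<Rightarrow> nat) \<Rightarrow> nat \<Rightarrow> bool" where
  "tail_matches z x \<sigma> n \<longleftrightarrow> (\<forall>t\<in>{1..<n}. x (Suc t) = z ! (\<sigma> t - 1))"

definition eta_value :: "nat \<Rightarrow> nat list \<Rightarrow> nat \<Rightarrow> (nat \<Rightarrow> nat) \<Rightarrow> real" where
  "eta_value n z j x = (if x 1 = j
     then (\<Sum>\<sigma> \<in> {\<sigma>. \<sigma> permutes {1..n-1}}. of_int (sign \<sigma>) * (if tail_matches z x \<sigma> n then 1 else 0))
     else 0)"

lemma eta_index:
  assumes z: "length z = n - 1" "set z \<subseteq> {1..\<kappa>}" and "1 \<le> n" "1 \<le> j"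
    and x: "profile n \<kappa> x"
  shows "eta n \<kappa> z j $ digit_index \<kappa> x 1 (n + 1) = eta_value n z j x"
proof -
  define M where "M = \<kappa> ^ (n - 1)"
  define c where "c = digit_index \<kappa> x 1 (n + 1)"
  have x': "x ` {1..<n+1} \<subseteq> {1..\<kappa>}"
    using x by (simp add: profile_iff_image)
  have x1: "x 1 \<in> {1..\<kappa>}" and xs: "(\<lambda>t. x (Suc t)) ` {1..<n} \<subseteq> {1..\<kappa>}"
    using x' \<open>1 \<le> n\<close> by (auto simp: image_subset_iff)
  have kM: "\<kappa> * M = \<kappa> ^ n"
    using \<open>1 \<le> n\<close> by (simp add: M_def flip: power_Suc)
  have c: "c < \<kappa> * M"
    using digit_index_less[OF x'] kM by (simp add: c_def)
  have "n + 1 - 2 = n - 1"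
    by simp
  then have c_div: "c div M = x 1 - 1" and "c mod M = digit_index \<kappa> x 2 (n + 1)"
    using digit_index_div_mod[of 1 2 "n + 1" x \<kappa>] \<open>1 \<le> n\<close> x'
    by (auto simp: c_def M_def numeral_2_eq_2 image_subset_iff)
  then have c_mod: "c mod M = digit_index \<kappa> (\<lambda>t. x (Suc t)) 1 n"
    using digit_index_shift[of \<kappa> x 1 n] by (simp add: numeral_2_eq_2)
  have match: "kron_list (map (\<lambda>t. delta \<kappa> (z ! (\<sigma> t - 1))) [1..<n]) $ (c mod M)
      = (if tail_matches z x \<sigma> n then 1 else 0)" if \<sigma>: "\<sigma> permutes {1..n-1}" for \<sigma>
  proof -
    have "(\<lambda>t. z ! (\<sigma> t - 1)) ` {1..<n} \<subseteq> set z"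
    proof
      fix y assume "y \<in> (\<lambda>t. z ! (\<sigma> t - 1)) ` {1..<n}"
      then obtain t where t: "t \<in> {1..<n}" "y = z ! (\<sigma> t - 1)"
        by blast
      then have "t \<in> {1..n-1}"
        by auto
      then have "\<sigma> t \<in> {1..n-1}"
        using permutes_in_image[OF \<sigma>] by blast
      then show "y \<in> set z"
        using z(1) t(2) by auto
    qed
    then show ?thesis
      unfolding c_mod tail_matches_def using z(2)
      by (subst kron_list_deltas_index[OF xs]) auto
  qed
  have M: "0 < M"
    using c by (cases M) auto
  have "eta n \<kappa> z j $ c = delta \<kappa> j $ (c div M) * (\<Sum>\<sigma> \<in> {\<sigma>. \<sigma> permutes {1..n-1}}.
      of_int (sign \<sigma>) * kron_list (map (\<lambda>t. delta \<kappa> (z ! (\<sigma> t - 1))) [1..<n]) $ (c mod M))"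
    using c mod_less_divisor[OF M, of c] unfolding eta_def kron_vec_def M_def[symmetric]
    by (simp add: delta_def)
  also have "delta \<kappa> j $ (c div M) = (if x 1 = j then 1 else 0)"
    using x1 \<open>1 \<le> j\<close> unfolding c_div delta_def unit_vec_def by auto
  also have "(\<Sum>\<sigma> \<in> {\<sigma>. \<sigma> permutes {1..n-1}}.
      of_int (sign \<sigma>) * kron_list (map (\<lambda>t. delta \<kappa> (z ! (\<sigma> t - 1))) [1..<n]) $ (c mod M))
    = (\<Sum>\<sigma> \<in> {\<sigma>. \<sigma> permutes {1..n-1}}. of_int (sign \<sigma>) * (if tail_matches z x \<sigma> n then 1 else 0))"
    using match by (intro sum.cong) auto
  finally show ?thesis
    unfolding c_def eta_value_def by simp
qed

lemma div_less_length_inc_tuples: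
  "r < \<kappa> * length (inc_tuples n \<kappa>) \<Longrightarrow> r div \<kappa> < length (inc_tuples n \<kappa>)"
  by (simp add: less_mult_imp_div_less mult.commute)

lemma B_mat_index:
  assumes "1 \<le> n" "r < \<kappa> * length (inc_tuples n \<kappa>)" and x: "profile n \<kappa> x"
  shows "B_mat n \<kappa> $$ (r, digit_index \<kappa> x 1 (n + 1))
       = eta_value n (inc_tuples n \<kappa> ! (r div \<kappa>)) (r mod \<kappa> + 1) x"
proof -
  have "r div \<kappa> < length (inc_tuples n \<kappa>)"
    using assms(2) by (rule div_less_length_inc_tuples)
  moreover have "digit_index \<kappa> x 1 (n + 1) < \<kappa> ^ n"
    using digit_index_less[of x 1 "n + 1" \<kappa>] x by (simp add: profile_iff_image)
  ultimately show ?thesis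
    using assms(2) eta_index[OF inc_tuples_nth(1,3) assms(1) _ x] unfolding B_mat_def by simp
qed

section \<open>Functions alternating in the opponents\<close>

text \<open>A permutation of the players {1..n} fixing player 1 as a permutation of the opponent
  positions {1..n-1} (position s is player s + 1), and back.\<close>
definition shift_perm_down :: "nat \<Rightarrow> (nat \<Rightarrow> nat) \<Rightarrow> nat \<Rightarrow> nat" where
  "shift_perm_down n \<pi> s = (if s \<in> {1..n-1} then \<pi> (Suc s) - 1 else s)"

definition shift_perm_up :: "nat \<Rightarrow> (nat \<Rightarrow> nat) \<Rightarrow> nat \<Rightarrow> nat" where
  "shift_perm_up n \<sigma> t = (if t \<in> {2..n} then Suc (\<sigma> (t - 1)) else t)"

lemma shift_perm_down:
  assumes "\<pi> permutes {1..n}" "\<pi> 1 = 1"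
  shows "shift_perm_down n \<pi> permutes {1..n-1}" "sign (shift_perm_down n \<pi>) = sign \<pi>"
    and "s \<in> {1..n-1} \<Longrightarrow> \<pi> (Suc s) = Suc (shift_perm_down n \<pi> s)"
proof -
  have \<pi>: "\<pi> permutes {2..n}"
  proof (rule permutes_superset[OF assms(1)])
    fix t assume "t \<in> {1..n} - {2..n}"
    then have "t = 1"
      by auto
    then show "\<pi> t = t"
      using assms(2) by simp
  qed
  have "bij_betw (\<lambda>t. t - 1) {2..n} {1..n-1}"
    by (rule bij_betw_byWitness[where f' = Suc]) auto
  then interpret permutes_bij_finite \<pi> "{2..n}" "{1..n-1}" "\<lambda>t. t - 1" Suc "shift_perm_down n \<pi>"
    by unfold_locales (use \<pi> in \<open>auto simp: shift_perm_down_def[abs_def]\<close>)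
  show "shift_perm_down n \<pi> permutes {1..n-1}"
    by (rule permutes_p')
  show "sign (shift_perm_down n \<pi>) = sign \<pi>"
    by (rule sign_p')
  show "\<pi> (Suc s) = Suc (shift_perm_down n \<pi> s)" if "s \<in> {1..n-1}"
  proof -
    have "Suc s \<in> {2..n}"
      using that by auto
    then have "\<pi> (Suc s) \<in> {2..n}"
      using permutes_in_image[OF \<pi>] by blast
    then show ?thesis
      using that by (auto simp: shift_perm_down_def)
  qed
qed

lemma shift_perm_up:
  assumes "\<sigma> permutes {1..n-1}"
  shows "shift_perm_up n \<sigma> permutes {1..n}" "shift_perm_up n \<sigma> 1 = 1"
    "sign (shift_perm_up n \<sigma>) = sign \<sigma>"
proof -
  have "bij_betw Suc {1..n-1} {2..n}"
    by (rule bij_betw_byWitness[where f' = "\<lambda>t. t - 1"]) auto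
  then interpret permutes_bij_finite \<sigma> "{1..n-1}" "{2..n}" Suc "\<lambda>t. t - 1" "shift_perm_up n \<sigma>"
    by unfold_locales (use assms in \<open>auto simp: shift_perm_up_def[abs_def]\<close>)
  show "shift_perm_up n \<sigma> permutes {1..n}"
    using permutes_p' by (rule permutes_subset) auto
  show "shift_perm_up n \<sigma> 1 = 1"
    by (simp add: shift_perm_up_def)
  show "sign (shift_perm_up n \<sigma>) = sign \<sigma>"
    by (rule sign_p')
qed

lemma tail_matches_unique:
  assumes z: "distinct z" "length z = n - 1"
    and \<sigma>: "\<sigma> permutes {1..n-1}" "tail_matches z x \<sigma> n"
    and \<sigma>': "\<sigma>' permutes {1..n-1}" "tail_matches z x \<sigma>' n"
  shows "\<sigma> = \<sigma>'"
proof
  fix t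
  show "\<sigma> t = \<sigma>' t"
  proof (cases "t \<in> {1..n-1}")
    case True
    then have images: "\<sigma> t \<in> {1..n-1}" "\<sigma>' t \<in> {1..n-1}"
      using permutes_in_image[OF \<sigma>(1)] permutes_in_image[OF \<sigma>'(1)] by blast+
    have "z ! (\<sigma> t - 1) = z ! (\<sigma>' t - 1)"
      using \<sigma>(2) \<sigma>'(2) True unfolding tail_matches_def by auto
    then have "\<sigma> t - 1 = \<sigma>' t - 1"
      using nth_eq_iff_index_eq[OF z(1)] images z(2) by auto
    then show ?thesis
      using images by auto
  next
    case False
    then show ?thesis
      using permutes_not_in[OF \<sigma>(1)] permutes_not_in[OF \<sigma>'(1)] by simp
  qed
qed

lemma eta_value_matching:
  assumes z: "distinct z" "length z = n - 1"
    and \<sigma>: "\<sigma> permutes {1..n-1}" "tail_matches z x \<sigma> n"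
  shows "eta_value n z j x = (if x 1 = j then of_int (sign \<sigma>) else 0)"
proof -
  have "(\<Sum>\<sigma>'\<in>{\<sigma>. \<sigma> permutes {1..n-1}}. of_int (sign \<sigma>') * (if tail_matches z x \<sigma>' n then 1 else 0))
      = (\<Sum>\<sigma>'\<in>{\<sigma>. \<sigma> permutes {1..n-1}}. if \<sigma>' = \<sigma> then of_int (sign \<sigma>) else (0::real))"
  proof (rule sum.cong[OF refl])
    fix \<sigma>' assume "\<sigma>' \<in> {\<sigma>. \<sigma> permutes {1..n-1}}"
    then have "tail_matches z x \<sigma>' n \<longleftrightarrow> \<sigma>' = \<sigma>"
      using tail_matches_unique[OF z _ _ \<sigma>] \<sigma>(2) by blast
    then show "of_int (sign \<sigma>') * (if tail_matches z x \<sigma>' n then 1 else 0)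
        = (if \<sigma>' = \<sigma> then of_int (sign \<sigma>) else (0::real))"
      by simp
  qed
  also have "\<dots> = of_int (sign \<sigma>)"
    using \<sigma>(1) finite_permutations[of "{1..n-1}"] by simp
  finally show ?thesis
    unfolding eta_value_def by simp
qed

lemma eta_value_nonzero:
  assumes "eta_value n z j x \<noteq> 0"
  shows "x 1 = j" "\<exists>\<sigma>. \<sigma> permutes {1..n-1} \<and> tail_matches z x \<sigma> n"
proof -
  show "x 1 = j"
    using assms unfolding eta_value_def by (auto split: if_splits)
  show "\<exists>\<sigma>. \<sigma> permutes {1..n-1} \<and> tail_matches z x \<sigma> n"
  proof (rule ccontr)
    assume "\<not> ?thesis"
    then have "(\<Sum>\<sigma>\<in>{\<sigma>. \<sigma> permutes {1..n-1}}.
        of_int (sign \<sigma>) * (if tail_matches z x \<sigma> n then 1 else 0)) = (0::real)"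
      by (intro sum.neutral) auto
    then have "eta_value n z j x = 0"
      unfolding eta_value_def by simp
    then show False
      using assms by simp
  qed
qed

lemma tail_matches_set:
  assumes z: "length z = n - 1" and \<sigma>: "\<sigma> permutes {1..n-1}" "tail_matches z x \<sigma> n"
  shows "set z = x ` {2..n}"
proof
  show "set z \<subseteq> x ` {2..n}"
  proof
    fix y assume "y \<in> set z"
    then obtain i where i: "i < n - 1" "z ! i = y"
      using z by (auto simp: in_set_conv_nth)
    define t where "t = Hilbert_Choice.inv \<sigma> (Suc i)"
    have "Suc i \<in> {1..n-1}"
      using i by auto
    then have t: "t \<in> {1..n-1}"
      using permutes_in_image[OF permutes_inv[OF \<sigma>(1)]] unfolding t_def by blast
    have "\<sigma> t = Suc i"
      unfolding t_def using permutes_inverses(1)[OF \<sigma>(1)] by simp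
    then have "x (Suc t) = y"
      using \<sigma>(2) t i unfolding tail_matches_def by auto
    moreover have "Suc t \<in> {2..n}"
      using t by auto
    ultimately show "y \<in> x ` {2..n}"
      by blast
  qed
  show "x ` {2..n} \<subseteq> set z"
  proof
    fix y assume "y \<in> x ` {2..n}"
    then obtain t' where t': "t' \<in> {2..n}" "y = x t'"
      by auto
    define t where "t = t' - 1"
    have t: "t \<in> {1..n-1}" "y = x (Suc t)"
      using t' unfolding t_def by auto
    have "\<sigma> t \<in> {1..n-1}"
      using permutes_in_image[OF \<sigma>(1)] t(1) by blast
    then have "\<sigma> t - 1 < length z"
      using z by auto
    moreover have "y = z ! (\<sigma> t - 1)"
      using \<sigma>(2) t unfolding tail_matches_def by auto
    ultimately show "y \<in> set z"
      by simp
  qed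
qed

lemma tail_matches_inj_on:
  assumes z: "distinct z" "length z = n - 1" and \<sigma>: "\<sigma> permutes {1..n-1}" "tail_matches z x \<sigma> n"
  shows "inj_on x {2..n}"
proof (rule inj_onI)
  fix a b assume a: "a \<in> {2..n}" and b: "b \<in> {2..n}" and "x a = x b"
  have a': "a - 1 \<in> {1..n-1}" "a - 1 \<in> {1..<n}" "a = Suc (a - 1)"
    and b': "b - 1 \<in> {1..n-1}" "b - 1 \<in> {1..<n}" "b = Suc (b - 1)"
    using a b by auto
  have images: "\<sigma> (a - 1) \<in> {1..n-1}" "\<sigma> (b - 1) \<in> {1..n-1}"
    using permutes_in_image[OF \<sigma>(1)] a'(1) b'(1) by blast+
  have "x (Suc (a - 1)) = z ! (\<sigma> (a - 1) - 1)" "x (Suc (b - 1)) = z ! (\<sigma> (b - 1) - 1)"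
    using \<sigma>(2) a'(2) b'(2) unfolding tail_matches_def by blast+
  then have "z ! (\<sigma> (a - 1) - 1) = z ! (\<sigma> (b - 1) - 1)"
    using a'(3) b'(3) \<open>x a = x b\<close> by simp
  moreover have lt: "\<sigma> (a - 1) - 1 < length z" "\<sigma> (b - 1) - 1 < length z"
  proof -
    have "p - 1 < length z" if "p \<in> {1..n-1}" for p
      using that z(2) by auto
    then show "\<sigma> (a - 1) - 1 < length z" "\<sigma> (b - 1) - 1 < length z"
      using images by blast+
  qed
  ultimately have "\<sigma> (a - 1) - 1 = \<sigma> (b - 1) - 1"
    using nth_eq_iff_index_eq[OF z(1) lt] by simp
  moreover have "1 \<le> \<sigma> (a - 1)" "1 \<le> \<sigma> (b - 1)"
    using images by auto
  ultimately have "\<sigma> (a - 1) = \<sigma> (b - 1)"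
    by arith
  then have "a - 1 = b - 1"
    using permutes_inj[OF \<sigma>(1)] by (auto dest: injD)
  then show "a = b"
    using a'(3) b'(3) by simp
qed

lemma tail_matches_exists:
  assumes n: "2 \<le> n" and x: "profile n \<kappa> x" and inj: "inj_on x {2..n}"
  defines "zs \<equiv> sorted_list_of_set (x ` {2..n})"
  shows "zs \<in> set (inc_tuples n \<kappa>)" "\<exists>\<sigma>. \<sigma> permutes {1..n-1} \<and> tail_matches zs x \<sigma> n"
proof -
  have set_zs: "set zs = x ` {2..n}"
    unfolding zs_def by simp
  have length_zs: "length zs = n - 1"
    unfolding zs_def using card_image[OF inj] by simp
  have "set zs \<subseteq> {1..\<kappa>}"
    using x unfolding set_zs profile_def by auto
  then show "zs \<in> set (inc_tuples n \<kappa>)"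
    using length_zs by (simp add: set_inc_tuples zs_def)
  define f where "f = (\<lambda>t. SOME i. i < n - 1 \<and> zs ! i = x (Suc t))"
  have f: "f t < n - 1 \<and> zs ! (f t) = x (Suc t)" if "t \<in> {1..n-1}" for t
  proof -
    have "x (Suc t) \<in> set zs"
      using that set_zs by auto
    then have "\<exists>i. i < n - 1 \<and> zs ! i = x (Suc t)"
      using length_zs by (auto simp: in_set_conv_nth)
    then show ?thesis
      unfolding f_def by (rule someI_ex)
  qed
  define \<sigma> where "\<sigma> = (\<lambda>t. if t \<in> {1..n-1} then Suc (f t) else t)"
  have image: "\<sigma> ` {1..n-1} \<subseteq> {1..n-1}"
    using f unfolding \<sigma>_def by fastforce
  have "inj_on \<sigma> {1..n-1}"
  proof (rule inj_onI)
    fix a b assume a: "a \<in> {1..n-1}" and b: "b \<in> {1..n-1}" and "\<sigma> a = \<sigma> b"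
    then have "x (Suc a) = x (Suc b)"
      using f[OF a] f[OF b] unfolding \<sigma>_def by simp
    moreover have "Suc a \<in> {2..n}" "Suc b \<in> {2..n}"
      using a b by auto
    ultimately show "a = b"
      using inj by (auto dest: inj_onD)
  qed
  then have "bij_betw \<sigma> {1..n-1} {1..n-1}"
    using endo_inj_surj[OF _ image] by (simp add: bij_betw_def)
  then have "\<sigma> permutes {1..n-1}"
    by (rule bij_imp_permutes) (auto simp: \<sigma>_def)
  moreover have "tail_matches zs x \<sigma> n"
    unfolding tail_matches_def \<sigma>_def using f by auto
  ultimately show "\<exists>\<sigma>. \<sigma> permutes {1..n-1} \<and> tail_matches zs x \<sigma> n"
    by blast
qed

text \<open>Profiles are functions on all of nat; the second clause says that only the strategies of
  the players 1, ..., n matter.\<close>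
definition tail_alternating :: "nat \<Rightarrow> nat \<Rightarrow> ((nat \<Rightarrow> nat) \<Rightarrow> real) \<Rightarrow> bool" where
  "tail_alternating n \<kappa> G \<longleftrightarrow>
     (\<forall>\<pi> x. \<pi> permutes {1..n} \<longrightarrow> \<pi> 1 = 1 \<longrightarrow> profile n \<kappa> x \<longrightarrow>
        G (x \<circ> \<pi>) = of_int (sign \<pi>) * G x) \<and>
     (\<forall>x y. (\<forall>t\<in>{1..n}. x t = y t) \<longrightarrow> G x = G y)"

lemma tail_matches_comp:
  assumes \<pi>: "\<pi> permutes {1..n}" "\<pi> 1 = 1" and m: "tail_matches z x \<sigma> n"
  shows "tail_matches z (x \<circ> \<pi>) (\<sigma> \<circ> shift_perm_down n \<pi>) n"
  unfolding tail_matches_def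
proof
  fix t assume "t \<in> {1..<n}"
  then have t: "t \<in> {1..n-1}"
    by auto
  then have "shift_perm_down n \<pi> t \<in> {1..n-1}"
    using permutes_in_image[OF shift_perm_down(1)[OF \<pi>]] by blast
  then have "shift_perm_down n \<pi> t \<in> {1..<n}"
    by auto
  then have "x (Suc (shift_perm_down n \<pi> t)) = z ! (\<sigma> (shift_perm_down n \<pi> t) - 1)"
    using m unfolding tail_matches_def by blast
  then show "(x \<circ> \<pi>) (Suc t) = z ! ((\<sigma> \<circ> shift_perm_down n \<pi>) t - 1)"
    using shift_perm_down(3)[OF \<pi> t] by simp
qed

lemma ex_tail_matches_comp_iff:
  assumes \<pi>: "\<pi> permutes {1..n}" "\<pi> 1 = 1"
  shows "(\<exists>\<sigma>. \<sigma> permutes {1..n-1} \<and> tail_matches z (x \<circ> \<pi>) \<sigma> n)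
     \<longleftrightarrow> (\<exists>\<sigma>. \<sigma> permutes {1..n-1} \<and> tail_matches z x \<sigma> n)"
proof
  have inv: "Hilbert_Choice.inv \<pi> permutes {1..n}" "Hilbert_Choice.inv \<pi> 1 = 1"
    using permutes_inv[OF \<pi>(1)] permutes_inv_eq[OF \<pi>(1)] \<pi>(2) by auto
  assume "\<exists>\<sigma>. \<sigma> permutes {1..n-1} \<and> tail_matches z (x \<circ> \<pi>) \<sigma> n"
  then obtain \<sigma> where \<sigma>: "\<sigma> permutes {1..n-1}" "tail_matches z (x \<circ> \<pi>) \<sigma> n"
    by blast
  have "tail_matches z (x \<circ> \<pi> \<circ> Hilbert_Choice.inv \<pi>) (\<sigma> \<circ> shift_perm_down n (Hilbert_Choice.inv \<pi>)) n"
    using tail_matches_comp[OF inv \<sigma>(2)] .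
  moreover have "x \<circ> \<pi> \<circ> Hilbert_Choice.inv \<pi> = x"
    using permutes_inv_o(1)[OF \<pi>(1)] by (simp add: comp_assoc)
  moreover have "\<sigma> \<circ> shift_perm_down n (Hilbert_Choice.inv \<pi>) permutes {1..n-1}"
    using permutes_compose[OF shift_perm_down(1)[OF inv] \<sigma>(1)] .
  ultimately show "\<exists>\<sigma>. \<sigma> permutes {1..n-1} \<and> tail_matches z x \<sigma> n"
    by auto
next
  assume "\<exists>\<sigma>. \<sigma> permutes {1..n-1} \<and> tail_matches z x \<sigma> n"
  then show "\<exists>\<sigma>. \<sigma> permutes {1..n-1} \<and> tail_matches z (x \<circ> \<pi>) \<sigma> n"
    using tail_matches_comp[OF \<pi>] permutes_compose[OF shift_perm_down(1)[OF \<pi>]] by blast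
qed

lemma eta_value_cong:
  assumes "\<forall>t\<in>{1..n}. x t = y t" "1 \<le> n"
  shows "eta_value n z j x = eta_value n z j y"
proof -
  have "x 1 = y 1" using assms by auto
  moreover have "tail_matches z x \<sigma> n = tail_matches z y \<sigma> n" for \<sigma>
    using assms unfolding tail_matches_def by auto
  ultimately show ?thesis unfolding eta_value_def by simp
qed

lemma tail_alternating_eta_value:
  assumes z: "distinct z" "length z = n - 1" and n: "2 \<le> n"
  shows "tail_alternating n \<kappa> (eta_value n z j)"
  unfolding tail_alternating_def
proof (intro conjI allI impI)
  fix \<pi> x assume \<pi>: "\<pi> permutes {1..n}" "\<pi> 1 = 1" and "profile n \<kappa> x"
  show "eta_value n z j (x \<circ> \<pi>) = of_int (sign \<pi>) * eta_value n z j x"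
  proof (cases "\<exists>\<sigma>. \<sigma> permutes {1..n-1} \<and> tail_matches z x \<sigma> n")
    case True
    then obtain \<sigma> where \<sigma>: "\<sigma> permutes {1..n-1}" "tail_matches z x \<sigma> n"
      by blast
    have "\<sigma> \<circ> shift_perm_down n \<pi> permutes {1..n-1}"
      using permutes_compose[OF shift_perm_down(1)[OF \<pi>] \<sigma>(1)] .
    moreover have "sign (\<sigma> \<circ> shift_perm_down n \<pi>) = sign \<sigma> * sign \<pi>"
      using sign_compose[OF permutes_imp_permutation permutes_imp_permutation, OF _ \<sigma>(1) _
          shift_perm_down(1)[OF \<pi>]] shift_perm_down(2)[OF \<pi>] by simp
    ultimately show ?thesis
      using eta_value_matching[OF z _ tail_matches_comp[OF \<pi> \<sigma>(2)]] eta_value_matching[OF z \<sigma>] \<pi>(2)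
      by simp
  next
    case False
    then have "eta_value n z j x = 0"
      using eta_value_nonzero(2) by blast
    moreover have "\<not> (\<exists>\<sigma>. \<sigma> permutes {1..n-1} \<and> tail_matches z (x \<circ> \<pi>) \<sigma> n)"
      using False unfolding ex_tail_matches_comp_iff[OF \<pi>] .
    then have "eta_value n z j (x \<circ> \<pi>) = 0"
      using eta_value_nonzero(2) by blast
    ultimately show ?thesis
      by simp
  qed
qed (use n in \<open>auto intro: eta_value_cong\<close>)

definition row_profile :: "nat \<Rightarrow> nat \<Rightarrow> nat \<Rightarrow> nat \<Rightarrow> nat" where
  "row_profile n \<kappa> r = (\<lambda>t. if t = 1 then r mod \<kappa> + 1 else (inc_tuples n \<kappa> ! (r div \<kappa>)) ! (t - 2))"

definition B_row_value :: "nat \<Rightarrow> nat \<Rightarrow> nat \<Rightarrow> (nat \<Rightarrow> nat) \<Rightarrow> real" where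
  "B_row_value n \<kappa> r = eta_value n (inc_tuples n \<kappa> ! (r div \<kappa>)) (r mod \<kappa> + 1)"

lemma profile_row_profile:
  assumes "r < \<kappa> * length (inc_tuples n \<kappa>)"
  shows "profile n \<kappa> (row_profile n \<kappa> r)"
  unfolding profile_def
proof
  fix t assume t: "t \<in> {1..n}"
  define z where "z = inc_tuples n \<kappa> ! (r div \<kappa>)"
  have z: "length z = n - 1" "set z \<subseteq> {1..\<kappa>}"
    using inc_tuples_nth[OF div_less_length_inc_tuples[OF assms]] by (simp_all add: z_def)
  show "row_profile n \<kappa> r t \<in> {1..\<kappa>}"
  proof (cases "t = 1")
    case True
    have "0 < \<kappa>"
      using assms by (cases \<kappa>) auto
    then show ?thesis
      using True by (simp add: row_profile_def Suc_le_eq)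
  next
    case False
    then have "z ! (t - 2) \<in> set z"
      using t z(1) by auto
    then show ?thesis
      using False z(2) by (auto simp: row_profile_def z_def)
  qed
qed

lemma B_row_value_row_profile:
  assumes "r < \<kappa> * length (inc_tuples n \<kappa>)"
  shows "B_row_value n \<kappa> r (row_profile n \<kappa> r) = 1"
proof -
  define z where "z = inc_tuples n \<kappa> ! (r div \<kappa>)"
  have z: "length z = n - 1" "distinct z"
    using inc_tuples_nth[OF div_less_length_inc_tuples[OF assms]] by (simp_all add: z_def)
  have m: "tail_matches z (row_profile n \<kappa> r) id n"
    unfolding tail_matches_def row_profile_def z_def by auto
  show ?thesis
    unfolding B_row_value_def z_def[symmetric] eta_value_matching[OF z(2,1) permutes_id m]
    by (simp add: row_profile_def)
qed

lemma B_row_value_nonzero_unique: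
  assumes r: "r < \<kappa> * length (inc_tuples n \<kappa>)" and r': "r' < \<kappa> * length (inc_tuples n \<kappa>)"
    and "B_row_value n \<kappa> r x \<noteq> 0" "B_row_value n \<kappa> r' x \<noteq> 0"
  shows "r = r'"
proof -
  define z z' where "z = inc_tuples n \<kappa> ! (r div \<kappa>)" and "z' = inc_tuples n \<kappa> ! (r' div \<kappa>)"
  have i: "r div \<kappa> < length (inc_tuples n \<kappa>)" "r' div \<kappa> < length (inc_tuples n \<kappa>)"
    using r r' by (simp_all add: div_less_length_inc_tuples)
  have "x 1 = r mod \<kappa> + 1" "x 1 = r' mod \<kappa> + 1"
    using eta_value_nonzero(1) assms(3,4) unfolding B_row_value_def by blast+
  moreover obtain \<sigma> \<sigma>' where "\<sigma> permutes {1..n-1}" "tail_matches z x \<sigma> n"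
    and "\<sigma>' permutes {1..n-1}" "tail_matches z' x \<sigma>' n"
    using eta_value_nonzero(2) assms(3,4) unfolding B_row_value_def z_def z'_def by blast
  then have "set z = set z'"
    using tail_matches_set[of z n] tail_matches_set[of z' n]
      inc_tuples_nth(1)[OF i(1)] inc_tuples_nth(1)[OF i(2)] unfolding z_def z'_def by simp
  then have "z = z'"
    using strict_sorted_equal[OF inc_tuples_nth(4)[OF i(1)] inc_tuples_nth(4)[OF i(2)]]
    unfolding z_def z'_def by simp
  then have "r div \<kappa> = r' div \<kappa>"
    using nth_eq_iff_index_eq[OF distinct_inc_tuples i] unfolding z_def z'_def by simp
  ultimately show "r = r'"
    by (metis add_right_cancel div_mult_mod_eq)
qed

lemma sum_B_row_value_single:
  assumes "r0 < \<kappa> * length (inc_tuples n \<kappa>)" "B_row_value n \<kappa> r0 x \<noteq> 0"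
  shows "(\<Sum>r<\<kappa> * length (inc_tuples n \<kappa>). f r * B_row_value n \<kappa> r x) = f r0 * B_row_value n \<kappa> r0 x"
proof -
  have "(\<Sum>r<\<kappa> * length (inc_tuples n \<kappa>). f r * B_row_value n \<kappa> r x)
      = (\<Sum>r<\<kappa> * length (inc_tuples n \<kappa>). if r = r0 then f r0 * B_row_value n \<kappa> r0 x else 0)"
    using B_row_value_nonzero_unique[OF _ assms(1) _ assms(2)] by (intro sum.cong) auto
  then show ?thesis
    using assms(1) by simp
qed

lemma B_row_index:
  assumes "i < length (inc_tuples n \<kappa>)" "s < \<kappa>"
  shows "i * \<kappa> + s < \<kappa> * length (inc_tuples n \<kappa>)"
    and "(i * \<kappa> + s) div \<kappa> = i" "(i * \<kappa> + s) mod \<kappa> = s"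
proof -
  have "i * \<kappa> + s < (i + 1) * \<kappa>"
    using assms(2) by simp
  also have "\<dots> \<le> length (inc_tuples n \<kappa>) * \<kappa>"
    using assms(1) by (intro mult_right_mono) auto
  finally show "i * \<kappa> + s < \<kappa> * length (inc_tuples n \<kappa>)"
    by (simp add: mult.commute)
  show "(i * \<kappa> + s) div \<kappa> = i" "(i * \<kappa> + s) mod \<kappa> = s"
    using assms(2) by simp_all
qed

lemma row_profile_comp_shift_perm_up:
  assumes \<sigma>: "\<sigma> permutes {1..n-1}" "tail_matches (inc_tuples n \<kappa> ! (r div \<kappa>)) x \<sigma> n"
    and x1: "x 1 = r mod \<kappa> + 1" and t: "t \<in> {1..n}"
  shows "(row_profile n \<kappa> r \<circ> shift_perm_up n \<sigma>) t = x t"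
proof (cases "t = 1")
  case True
  then show ?thesis
    using x1 by (simp add: row_profile_def shift_perm_up_def)
next
  case False
  then have t': "t \<in> {2..n}" "t - 1 \<in> {1..n-1}" "t - 1 \<in> {1..<n}" "Suc (t - 1) = t"
    using t by auto
  then have "\<sigma> (t - 1) \<in> {1..n-1}"
    using permutes_in_image[OF \<sigma>(1)] by blast
  then have "(row_profile n \<kappa> r \<circ> shift_perm_up n \<sigma>) t
      = inc_tuples n \<kappa> ! (r div \<kappa>) ! (\<sigma> (t - 1) - 1)"
    using t' by (simp add: shift_perm_up_def row_profile_def)
  also have "\<dots> = x (Suc (t - 1))"
    using bspec[OF \<sigma>(2)[unfolded tail_matches_def] t'(3)] by (rule sym)
  finally show ?thesis
    unfolding t'(4) .
qed

lemma injective_profile_row_profile: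
  assumes n: "2 \<le> n" and x: "profile n \<kappa> x" and inj: "inj_on x {2..n}"
  obtains r \<pi> where "r < \<kappa> * length (inc_tuples n \<kappa>)" "\<pi> permutes {1..n}" "\<pi> 1 = 1"
    "\<forall>t\<in>{1..n}. (row_profile n \<kappa> r \<circ> \<pi>) t = x t" "B_row_value n \<kappa> r x = of_int (sign \<pi>)"
proof -
  define zs where "zs = sorted_list_of_set (x ` {2..n})"
  obtain \<sigma> where \<sigma>: "\<sigma> permutes {1..n-1}" "tail_matches zs x \<sigma> n"
    using tail_matches_exists(2)[OF n x inj] unfolding zs_def by blast
  obtain i where i: "i < length (inc_tuples n \<kappa>)" "inc_tuples n \<kappa> ! i = zs"
    using tail_matches_exists(1)[OF n x inj] unfolding zs_def[symmetric] by (auto simp: in_set_conv_nth)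
  have "x 1 \<in> {1..\<kappa>}"
    using x n by (simp add: profile_def)
  then have x1: "x 1 - 1 < \<kappa>" "1 \<le> x 1"
    by auto
  define r where "r = i * \<kappa> + (x 1 - 1)"
  note r = B_row_index[OF i(1) x1(1), folded r_def]
  have tuple: "inc_tuples n \<kappa> ! (r div \<kappa>) = zs" and x1r: "x 1 = r mod \<kappa> + 1"
    using r(2,3) i(2) x1(2) by simp_all
  have "\<forall>t\<in>{1..n}. (row_profile n \<kappa> r \<circ> shift_perm_up n \<sigma>) t = x t"
    using row_profile_comp_shift_perm_up[OF \<sigma>(1) \<sigma>(2)[folded tuple] x1r] by blast
  moreover have "B_row_value n \<kappa> r x = of_int (sign (shift_perm_up n \<sigma>))"
    using eta_value_matching[OF inc_tuples_nth(2,1)[OF i(1), unfolded i(2)] \<sigma>, of "r mod \<kappa> + 1"]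
      x1r shift_perm_up(3)[OF \<sigma>(1)] by (simp add: B_row_value_def tuple)
  ultimately show ?thesis
    using that r(1) shift_perm_up(1,2)[OF \<sigma>(1)] by blast
qed

lemma B_row_value_eq_0_if_not_inj:
  assumes "r < \<kappa> * length (inc_tuples n \<kappa>)" "\<not> inj_on x {2..n}"
  shows "B_row_value n \<kappa> r x = 0"
proof (rule ccontr)
  assume "B_row_value n \<kappa> r x \<noteq> 0"
  then obtain \<sigma> where "\<sigma> permutes {1..n-1}" "tail_matches (inc_tuples n \<kappa> ! (r div \<kappa>)) x \<sigma> n"
    using eta_value_nonzero(2) unfolding B_row_value_def by blast
  then have "inj_on x {2..n}"
    using tail_matches_inj_on inc_tuples_nth[OF div_less_length_inc_tuples[OF assms(1)]] by blast
  then show False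
    using assms(2) by contradiction
qed

lemma tail_alternating_eq_0_if_not_inj:
  assumes G: "tail_alternating n \<kappa> G" and x: "profile n \<kappa> x" and "\<not> inj_on x {2..n}"
  shows "G x = 0"
proof -
  obtain a b where ab: "a \<in> {2..n}" "b \<in> {2..n}" "a \<noteq> b" "x a = x b"
    using assms(3) unfolding inj_on_def by blast
  define \<tau> where "\<tau> = Transposition.transpose a b"
  have "\<tau> permutes {1..n}" "\<tau> 1 = 1"
    using ab by (auto simp: \<tau>_def intro: permutes_swap_id)
  moreover have "x \<circ> \<tau> = x"
    using ab by (auto simp: \<tau>_def fun_eq_iff Transposition.transpose_def)
  ultimately have "G x = of_int (sign \<tau>) * G x"
    using G x unfolding tail_alternating_def by metis
  moreover have "sign \<tau> = -1"
    using ab by (simp add: \<tau>_def sign_swap_id)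
  ultimately show ?thesis
    by simp
qed

text \<open>The row functions of B form a basis of the tail-alternating functions, with dual basis
  given by evaluation at the row profiles.\<close>
lemma tail_alternating_expansion:
  assumes "2 \<le> n" and G: "tail_alternating n \<kappa> G" and x: "profile n \<kappa> x"
  shows "G x = (\<Sum>r<\<kappa> * length (inc_tuples n \<kappa>). G (row_profile n \<kappa> r) * B_row_value n \<kappa> r x)"
proof (cases "inj_on x {2..n}")
  case True
  then obtain r \<pi> where r: "r < \<kappa> * length (inc_tuples n \<kappa>)" and \<pi>: "\<pi> permutes {1..n}" "\<pi> 1 = 1"
    and agree: "\<forall>t\<in>{1..n}. (row_profile n \<kappa> r \<circ> \<pi>) t = x t"
    and val: "B_row_value n \<kappa> r x = of_int (sign \<pi>)"
    using injective_profile_row_profile[OF assms(1) x] by blast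
  have "G x = G (row_profile n \<kappa> r \<circ> \<pi>)"
    using G agree unfolding tail_alternating_def by metis
  also have "\<dots> = G (row_profile n \<kappa> r) * B_row_value n \<kappa> r x"
    using G \<pi> profile_row_profile[OF r] val unfolding tail_alternating_def by simp
  also have "\<dots> = (\<Sum>r'<\<kappa> * length (inc_tuples n \<kappa>). G (row_profile n \<kappa> r') * B_row_value n \<kappa> r' x)"
    using sum_B_row_value_single[OF r] val by simp
  finally show ?thesis .
next
  case False
  then show ?thesis
    using tail_alternating_eq_0_if_not_inj[OF G x] B_row_value_eq_0_if_not_inj by simp
qed

section \<open>Skew-symmetric games\<close>

definition B_rows_comb :: "nat \<Rightarrow> nat \<Rightarrow> (nat \<Rightarrow> real) \<Rightarrow> (nat \<Rightarrow> nat) \<Rightarrow> real" where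
  "B_rows_comb n \<kappa> c x = (\<Sum>r<\<kappa> * length (inc_tuples n \<kappa>). c r * B_row_value n \<kappa> r x)"

lemma tail_alternating_sum:
  assumes "\<And>r. r \<in> S \<Longrightarrow> tail_alternating n \<kappa> (g r)"
  shows "tail_alternating n \<kappa> (\<lambda>x. \<Sum>r\<in>S. c r * g r x)"
  unfolding tail_alternating_def
proof (intro conjI allI impI)
  fix \<pi> x assume "\<pi> permutes {1..n}" "\<pi> 1 = 1" "profile n \<kappa> x"
  then have "(\<Sum>r\<in>S. c r * g r (x \<circ> \<pi>)) = (\<Sum>r\<in>S. of_int (sign \<pi>) * (c r * g r x))"
    using assms unfolding tail_alternating_def by (intro sum.cong) auto
  then show "(\<Sum>r\<in>S. c r * g r (x \<circ> \<pi>)) = of_int (sign \<pi>) * (\<Sum>r\<in>S. c r * g r x)"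
    by (simp add: sum_distrib_left)
next
  fix x y :: "nat \<Rightarrow> nat" assume "\<forall>t\<in>{1..n}. x t = y t"
  then show "(\<Sum>r\<in>S. c r * g r x) = (\<Sum>r\<in>S. c r * g r y)"
    using assms unfolding tail_alternating_def by (intro sum.cong) auto
qed

lemma tail_alternating_B_rows_comb:
  assumes "2 \<le> n"
  shows "tail_alternating n \<kappa> (B_rows_comb n \<kappa> c)"
proof -
  have "tail_alternating n \<kappa> (B_row_value n \<kappa> r)" if "r < \<kappa> * length (inc_tuples n \<kappa>)" for r
    using inc_tuples_nth[OF div_less_length_inc_tuples[OF that]] tail_alternating_eta_value assms
    unfolding B_row_value_def by blast
  then show ?thesis
    unfolding B_rows_comb_def[abs_def] by (intro tail_alternating_sum) simp
qed

lemma dim_D_mat: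
  "dim_row (D_mat n \<kappa>) = \<kappa> * length (inc_tuples n \<kappa>)" "dim_col (D_mat n \<kappa>) = n * \<kappa> ^ n"
  using B_mat_carrier[of n \<kappa>] unfolding D_mat_def carrier_mat_def by simp_all

lemma lincomb_rows_D_mat_index:
  assumes "b < n" "e < \<kappa> ^ n"
  shows "lincomb_rows (D_mat n \<kappa>) c $ (b * \<kappa> ^ n + e)
       = (\<Sum>r<\<kappa> * length (inc_tuples n \<kappa>). c r * D_block n \<kappa> b $$ (r, e))"
proof -
  have "b * \<kappa> ^ n + e < (b + 1) * \<kappa> ^ n"
    using assms(2) by simp
  also have "\<dots> \<le> n * \<kappa> ^ n"
    using assms(1) by (intro mult_right_mono) auto
  finally have idx: "b * \<kappa> ^ n + e < n * \<kappa> ^ n" .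
  have "e < m \<Longrightarrow> (b * m + e) div m = b \<and> (b * m + e) mod m = e" for m :: nat
    by simp
  from this[OF assms(2)] have "(b * \<kappa> ^ n + e) div \<kappa> ^ n = b" "(b * \<kappa> ^ n + e) mod \<kappa> ^ n = e"
    by auto
  then show ?thesis
    using idx B_mat_carrier[of n \<kappa>] unfolding lincomb_rows_def D_mat_def carrier_mat_def
    by (auto intro: sum.cong)
qed

lemma payoff_lincomb_rows_D_mat:
  assumes "2 \<le> n" "i \<in> {1..n}" and x: "profile n \<kappa> x"
  shows "payoff n \<kappa> (lincomb_rows (D_mat n \<kappa>) c) i x
       = (if i = 1 then B_rows_comb n \<kappa> c x else - B_rows_comb n \<kappa> c (x \<circ> Transposition.transpose 1 i))"
proof -
  define R where "R = \<kappa> * length (inc_tuples n \<kappa>)"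
  define e where "e = digit_index \<kappa> x 1 (n + 1)"
  have e: "e < \<kappa> ^ n"
    using digit_index_less[of x 1 "n + 1" \<kappa>] x by (simp add: e_def profile_iff_image)
  then have \<kappa>: "1 \<le> \<kappa>"
    using assms(1) by (cases \<kappa>) (auto simp: power_0_left)
  have R: "r < dim_row (B_mat n \<kappa>)" if "r < R" for r
    using that B_mat_carrier[of n \<kappa>] by (simp add: R_def)
  have "payoff n \<kappa> (lincomb_rows (D_mat n \<kappa>) c) i x = (\<Sum>r<R. c r * D_block n \<kappa> (i - 1) $$ (r, e))"
    unfolding payoff_eq_index[OF x] e_def[symmetric] R_def
    using assms(2) e by (intro lincomb_rows_D_mat_index) auto
  also have "\<dots> = (if i = 1 then B_rows_comb n \<kappa> c x else - B_rows_comb n \<kappa> c (x \<circ> Transposition.transpose 1 i))"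
  proof (cases "i = 1")
    case True
    have "D_block n \<kappa> 0 $$ (r, e) = B_row_value n \<kappa> r x" if "r < R" for r
      using B_mat_index[of n r \<kappa> x] that assms(1) x
      by (simp add: D_block_def B_row_value_def e_def R_def)
    then show ?thesis
      using True by (simp add: B_rows_comb_def R_def)
  next
    case False
    have "Transposition.transpose 1 i permutes {1..n}"
      using assms(2) by (intro permutes_swap_id) auto
    then have xi: "profile n \<kappa> (x \<circ> Transposition.transpose 1 i)"
      by (rule profile_comp[OF x])
    have b: "1 \<le> i - 1" "i - 1 < n" "i - 1 + 1 = i"
      using False assms(2) by auto
    have "D_block n \<kappa> (i - 1) $$ (r, e) = - B_row_value n \<kappa> r (x \<circ> Transposition.transpose 1 i)"
      if "r < R" for r
      using D_block_profile_index[OF \<kappa> b(1,2) R[OF that] x] B_mat_index[OF _ that[unfolded R_def] xi] assms(1)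
      unfolding b(3) by (simp add: B_row_value_def e_def)
    then show ?thesis
      using False by (simp add: B_rows_comb_def R_def sum_negf)
  qed
  finally show ?thesis .
qed

lemma tail_alternating_first_payoff:
  assumes "skew_symmetric_game n \<kappa> v"
  shows "tail_alternating n \<kappa> (payoff n \<kappa> v 1)"
  unfolding tail_alternating_def
proof (intro conjI allI impI)
  fix \<pi> x assume \<pi>: "\<pi> permutes {1..n}" "\<pi> 1 = 1" and x: "profile n \<kappa> x"
  show "payoff n \<kappa> v 1 (x \<circ> \<pi>) = of_int (sign \<pi>) * payoff n \<kappa> v 1 x"
  proof (cases "n = 0")
    case True
    then show ?thesis
      using \<pi> by (simp add: permutes_empty)
  next
    case False
    then have "payoff n \<kappa> v 1 (x \<circ> \<pi>)
        = of_int (sign \<pi>) * payoff n \<kappa> v (\<pi> 1) (\<lambda>t. (x \<circ> \<pi>) (Hilbert_Choice.inv \<pi> t))"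
      using assms \<pi>(1) profile_comp[OF x \<pi>(1)] unfolding skew_symmetric_game_def by simp
    also have "(\<lambda>t. (x \<circ> \<pi>) (Hilbert_Choice.inv \<pi> t)) = x"
      using permutes_inverses(1)[OF \<pi>(1)] by (simp add: fun_eq_iff)
    finally show ?thesis
      using \<pi>(2) by (simp add: comp_def)
  qed
qed (rule payoff_cong)

lemma payoff_skew_transpose:
  assumes "skew_symmetric_game n \<kappa> v" "i \<in> {2..n}" and x: "profile n \<kappa> x"
  shows "payoff n \<kappa> v i x = - payoff n \<kappa> v 1 (x \<circ> Transposition.transpose 1 i)"
proof -
  define \<tau> where "\<tau> = Transposition.transpose (1::nat) i"
  have \<tau>: "\<tau> permutes {1..n}" "sign \<tau> = -1" "\<tau> 1 = i"
    using assms(2) by (auto simp: \<tau>_def sign_swap_id intro: permutes_swap_id)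
  have "payoff n \<kappa> v 1 (x \<circ> \<tau>) = of_int (sign \<tau>) * payoff n \<kappa> v (\<tau> 1) (\<lambda>t. (x \<circ> \<tau>) (Hilbert_Choice.inv \<tau> t))"
    using assms(1,2) \<tau>(1) profile_comp[OF x \<tau>(1)] unfolding skew_symmetric_game_def by simp
  also have "(\<lambda>t. (x \<circ> \<tau>) (Hilbert_Choice.inv \<tau> t)) = x"
    by (simp add: \<tau>_def fun_eq_iff)
  finally show ?thesis
    using \<tau>(2,3) by (simp add: \<tau>_def comp_def)
qed

lemma tail_alternating_signed_comp:
  assumes G: "tail_alternating n \<kappa> G" and x: "profile n \<kappa> x"
    and \<rho>: "\<rho> permutes {1..n}" "\<rho>' permutes {1..n}" "\<rho> 1 = \<rho>' 1"
  shows "of_int (sign \<rho>) * G (x \<circ> \<rho>) = of_int (sign \<rho>') * G (x \<circ> \<rho>')"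
proof -
  define \<pi> where "\<pi> = Hilbert_Choice.inv \<rho>' \<circ> \<rho>"
  have \<pi>: "\<pi> permutes {1..n}" "\<pi> 1 = 1"
    using \<rho> permutes_inv[OF \<rho>(2)] permutes_inverses(2)[OF \<rho>(2)]
    by (auto simp: \<pi>_def intro: permutes_compose)
  have "\<rho> = \<rho>' \<circ> \<pi>"
    using permutes_inverses(1)[OF \<rho>(2)] by (simp add: \<pi>_def fun_eq_iff)
  then have "sign \<rho> = sign \<rho>' * sign \<pi>" and "x \<circ> \<rho> = (x \<circ> \<rho>') \<circ> \<pi>"
    using sign_compose[OF permutes_imp_permutation permutes_imp_permutation] \<rho>(2) \<pi>(1)
    by (auto simp: comp_assoc)
  moreover have "G ((x \<circ> \<rho>') \<circ> \<pi>) = of_int (sign \<pi>) * G (x \<circ> \<rho>')"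
    using G \<pi> profile_comp[OF x \<rho>(2)] unfolding tail_alternating_def by blast
  moreover have "real_of_int (sign \<pi>) * real_of_int (sign \<pi>) = 1"
    by (metis of_int_1 of_int_mult sign_idempotent)
  ultimately show ?thesis
    by (simp add: mult_ac)
qed

lemma skew_symmetric_gameI:
  assumes G: "tail_alternating n \<kappa> G"
    and payoff: "\<And>i x. i \<in> {1..n} \<Longrightarrow> profile n \<kappa> x \<Longrightarrow>
      payoff n \<kappa> v i x = of_int (sign (Transposition.transpose 1 i)) * G (x \<circ> Transposition.transpose 1 i)"
  shows "skew_symmetric_game n \<kappa> v"
  unfolding skew_symmetric_game_def
proof (intro allI impI ballI)
  fix \<sigma> i x assume \<sigma>: "\<sigma> permutes {1..n}" and i: "i \<in> {1..n}" and x: "profile n \<kappa> x"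
  let ?\<tau> = "\<lambda>i. Transposition.transpose (1::nat) i"
  define y where "y = x \<circ> Hilbert_Choice.inv \<sigma>"
  have \<sigma>i: "\<sigma> i \<in> {1..n}"
    using permutes_in_image[OF \<sigma>] i by blast
  have \<tau>: "?\<tau> j permutes {1..n}" if "j \<in> {1..n}" for j
    using that by (intro permutes_swap_id) auto
  have inv\<sigma>: "Hilbert_Choice.inv \<sigma> permutes {1..n}" "sign (Hilbert_Choice.inv \<sigma>) = sign \<sigma>"
    using permutes_inv[OF \<sigma>] sign_inverse[OF permutes_imp_permutation[OF _ \<sigma>]] by simp_all
  have "of_int (sign \<sigma>) * payoff n \<kappa> v (\<sigma> i) y
      = of_int (sign (Hilbert_Choice.inv \<sigma> \<circ> ?\<tau> (\<sigma> i))) * G (x \<circ> (Hilbert_Choice.inv \<sigma> \<circ> ?\<tau> (\<sigma> i)))"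
    using payoff[OF \<sigma>i profile_comp[OF x inv\<sigma>(1)]] inv\<sigma>(2)
      sign_compose[OF permutes_imp_permutation[OF _ inv\<sigma>(1)] permutation_swap_id]
    by (simp add: y_def comp_assoc)
  also have "\<dots> = of_int (sign (?\<tau> i)) * G (x \<circ> ?\<tau> i)"
    using permutes_inverses(2)[OF \<sigma>]
    by (intro tail_alternating_signed_comp[OF G x permutes_compose[OF \<tau>[OF \<sigma>i] inv\<sigma>(1)] \<tau>[OF i]]) simp
  also have "\<dots> = payoff n \<kappa> v i x"
    using payoff[OF i x] by simp
  finally show "payoff n \<kappa> v i x = of_int (sign \<sigma>) * payoff n \<kappa> v (\<sigma> i) (\<lambda>t. x (Hilbert_Choice.inv \<sigma> t))"
    by (simp add: y_def comp_def)
qed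

lemma vec_eq_if_payoffs_eq:
  assumes "1 \<le> \<kappa>" "dim_vec v = n * \<kappa> ^ n" "dim_vec w = n * \<kappa> ^ n"
    and payoffs: "\<And>i x. i \<in> {1..n} \<Longrightarrow> profile n \<kappa> x \<Longrightarrow> payoff n \<kappa> v i x = payoff n \<kappa> w i x"
  shows "v = w"
proof (rule eq_vecI)
  fix k assume "k < dim_vec w"
  then have k: "k < n * \<kappa> ^ n"
    using assms(3) by simp
  define i where "i = k div \<kappa> ^ n + 1"
  have pos: "0 < \<kappa> ^ n"
    using assms(1) by simp
  obtain x where x: "range x \<subseteq> {1..\<kappa>}" "digit_index \<kappa> x 1 (n + 1) = k mod \<kappa> ^ n"
    using digit_index_surj[OF assms(1), of 1 "n + 1" "k mod \<kappa> ^ n"] pos by auto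
  have px: "profile n \<kappa> x"
    unfolding profile_def using x(1) by blast
  have i: "i \<in> {1..n}"
    using k by (simp add: i_def less_mult_imp_div_less Suc_le_eq)
  have "k = (i - 1) * \<kappa> ^ n + digit_index \<kappa> x 1 (n + 1)"
    unfolding x(2) i_def add_diff_cancel_right' by (rule div_mult_mod_eq[symmetric])
  then show "v $ k = w $ k"
    using payoffs[OF i px] by (simp add: payoff_eq_index[OF px])
qed (use assms(2,3) in simp)

lemma D_mat_carrier: "D_mat n \<kappa> \<in> carrier_mat (\<kappa> * (\<kappa> choose (n - 1))) (n * \<kappa> ^ n)"
  by (rule carrier_matI) (simp_all only: dim_D_mat length_inc_tuples)

lemma coeffs_eq_0_if_lincomb_rows_D_mat_eq_0:
  assumes "2 \<le> n" "lincomb_rows (D_mat n \<kappa>) c = 0\<^sub>v (dim_col (D_mat n \<kappa>))"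
    and "r < dim_row (D_mat n \<kappa>)"
  shows "c r = 0"
proof -
  have r: "r < \<kappa> * length (inc_tuples n \<kappa>)"
    using assms(3) by (simp add: dim_D_mat)
  define x where "x = row_profile n \<kappa> r"
  have x: "profile n \<kappa> x"
    unfolding x_def by (rule profile_row_profile[OF r])
  have "c r = B_rows_comb n \<kappa> c x"
    using sum_B_row_value_single[OF r, of x c] B_row_value_row_profile[OF r]
    by (simp add: B_rows_comb_def x_def)
  also have "\<dots> = payoff n \<kappa> (0\<^sub>v (n * \<kappa> ^ n)) 1 x"
    using payoff_lincomb_rows_D_mat[OF assms(1) _ x, of 1 c] assms(1,2) by (simp add: dim_D_mat)
  also have "\<dots> = 0"
  proof -
    have "digit_index \<kappa> x 1 (n + 1) < 1 * \<kappa> ^ n"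
      using digit_index_less[of x 1 "n + 1" \<kappa>] x by (simp add: profile_iff_image)
    also have "\<dots> \<le> n * \<kappa> ^ n"
      using assms(1) by (intro mult_right_mono) auto
    finally show ?thesis
      by (simp add: payoff_eq_index[OF x])
  qed
  finally show ?thesis .
qed

lemma lincomb_rows_D_mat_in_skew_space:
  assumes "2 \<le> n"
  shows "lincomb_rows (D_mat n \<kappa>) c \<in> skew_space n \<kappa>"
proof -
  have "payoff n \<kappa> (lincomb_rows (D_mat n \<kappa>) c) i x = of_int (sign (Transposition.transpose 1 i))
      * B_rows_comb n \<kappa> c (x \<circ> Transposition.transpose 1 i)"
    if "i \<in> {1..n}" "profile n \<kappa> x" for i x
    unfolding payoff_lincomb_rows_D_mat[OF assms that] sign_swap_id by simp
  with tail_alternating_B_rows_comb[of n \<kappa> c, OF assms]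
  have "skew_symmetric_game n \<kappa> (lincomb_rows (D_mat n \<kappa>) c)"
    by (rule skew_symmetric_gameI)
  then show ?thesis
    unfolding skew_space_def by (simp add: lincomb_rows_def dim_D_mat)
qed

text \<open>A skew-symmetric game is determined by its first payoff, which is tail-alternating and
  hence expands in the row functions of B.\<close>
lemma skew_game_eq_lincomb_rows_D_mat:
  assumes "2 \<le> n" "1 \<le> \<kappa>" and v: "v \<in> skew_space n \<kappa>"
  shows "v = lincomb_rows (D_mat n \<kappa>) (\<lambda>r. payoff n \<kappa> v 1 (row_profile n \<kappa> r))"
    (is "v = lincomb_rows _ ?c")
proof (rule vec_eq_if_payoffs_eq[OF assms(2)])
  have skew: "skew_symmetric_game n \<kappa> v"
    using v by (simp add: skew_space_def)
  have first: "payoff n \<kappa> v 1 y = B_rows_comb n \<kappa> ?c y" if "profile n \<kappa> y" for y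
    using tail_alternating_expansion[OF assms(1) tail_alternating_first_payoff[OF skew] that]
    by (simp add: B_rows_comb_def)
  fix i x assume i: "i \<in> {1..n}" and x: "profile n \<kappa> x"
  show "payoff n \<kappa> v i x = payoff n \<kappa> (lincomb_rows (D_mat n \<kappa>) ?c) i x"
  proof (cases "i = 1")
    case False
    then have "i \<in> {2..n}"
      using i by auto
    moreover have "Transposition.transpose 1 i permutes {1..n}"
      using i by (intro permutes_swap_id) auto
    ultimately show ?thesis
      using payoff_skew_transpose[OF skew _ x] first[OF profile_comp[OF x]]
        payoff_lincomb_rows_D_mat[OF assms(1) i x] False by simp
  qed (use first[OF x] payoff_lincomb_rows_D_mat[OF assms(1) i x] in simp)
qed (use v in \<open>simp_all add: skew_space_def lincomb_rows_def dim_D_mat\<close>)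

theorem theorem4p5:
  fixes n \<kappa> :: nat
  assumes "2 \<le> n" and "n \<le> \<kappa> + 1"
  shows "D_mat n \<kappa> \<in> carrier_mat (\<kappa> * (\<kappa> choose (n - 1))) (n * \<kappa> ^ n)
     \<and> rows_form_basis (D_mat n \<kappa>) (skew_space n \<kappa>)"
proof -
  have "1 \<le> \<kappa>"
    using assms by simp
  then have "skew_space n \<kappa> = {lincomb_rows (D_mat n \<kappa>) c | c. True}"
    using skew_game_eq_lincomb_rows_D_mat[OF assms(1)] lincomb_rows_D_mat_in_skew_space[OF assms(1)]
    by blast
  then show ?thesis
    unfolding rows_form_basis_def using D_mat_carrier coeffs_eq_0_if_lincomb_rows_D_mat_eq_0[OF assms(1)] by blast
qed

end
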